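(* Assume (A1) and let $S$ be the function $$S(x,t)=\begin{cases}\inf_{v\in\mathbb{R}^n}\{J(x-tv)+tH^*(v)\},& t>0,\\ (J^*+I_{\mathrm{dom}\,H})^*(x),& t=0,\\ +\infty,& t<0.\end{cases}$$ Then for every $(x,t)\in\mathrm{dom}\,S$, $$\partial S(x,t)=\begin{cases}\{(\bar p,-H(\bar p))\},& (x,t)\in\mathrm{int}\,\mathrm{dom}\,S,\\ \{(p,E^-)\in(\partial_xS(x,0)\cap\mathrm{dom}\,H)\times\mathbb{R}:\ E^-\le-H(p)\},& t=0,\\ \emptyset,&\text{otherwise (i.e. } t>0,\ (x,t)\notin\mathrm{int}\,\mathrm{dom}\,S),\end{cases}$$ where $\bar p$ is the unique maximizer of $p\mapsto\langle p,x\rangle-tH(p)-J^*(p)$ and $\partial_xS(x,0)$ is the subdifferential of $y\mapsto S(y,0)$ at $x$.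
   Context: $\Gamma_0(\mathbb{R}^n)$ denotes the set of proper, convex, lower semicontinuous functions $\mathbb{R}^n\to\mathbb{R}\cup\{+\infty\}$; $f^*$ is the Legendre–Fenchel transform; $I_C$ is the indicator function of a set $C$; $\partial$ denotes the convex subdifferential (for $S$, jointly in $(x,t)$). A function $g$ is 1-coercive if $g(x)/\|x\|\to+\infty$ as $\|x\|\to\infty$. A function $f\in\Gamma_0(\mathbb{R}^n)$ is Legendre if: $\mathrm{int}\,\mathrm{dom}\,f\neq\emptyset$; $f$ is differentiable on $\mathrm{int}\,\mathrm{dom}\,f$; $\partial f(x)=\emptyset$ for $x\in\mathrm{dom}\,f\setminus\mathrm{int}\,\mathrm{dom}\,f$ and $\partial f(x)=\{\nabla f(x)\}$ on $\mathrm{int}\,\mathrm{dom}\,f$; and $f$ is strictly convex on $\mathrm{int}\,\mathrm{dom}\,f$. Assumption (A1): $J,H\in\Gamma_0(\mathbb{R}^n)$, $J$ is 1-coercive, and $H$ is a Legendre function. *)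

theory Defs
  imports "HOL-Analysis.Analysis" "HOL-Library.Extended_Real" "HOL-Library.Liminf_Limsup"
begin

text \<open>Extended-real valued functions on a Euclidean space; +\<infinity> encodes the value outside the domain.\<close>

definition edom :: "('a \<Rightarrow> ereal) \<Rightarrow> 'a set" where
  "edom f = {x. f x < \<infinity>}"

definition epigraph :: "('a \<Rightarrow> ereal) \<Rightarrow> ('a \<times> real) set" where
  "epigraph f = {(x, r). f x \<le> ereal r}"

definition proper_fun :: "('a \<Rightarrow> ereal) \<Rightarrow> bool" where
  "proper_fun f \<longleftrightarrow> (\<forall>x. f x \<noteq> -\<infinity>) \<and> (\<exists>x. f x < \<infinity>)"

definition convex_fun :: "('a::real_vector \<Rightarrow> ereal) \<Rightarrow> bool" where
  "convex_fun f \<longleftrightarrow> convex (epigraph f)"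

definition lsc_fun :: "('a::topological_space \<Rightarrow> ereal) \<Rightarrow> bool" where
  "lsc_fun f \<longleftrightarrow> (\<forall>x. f x \<le> Liminf (at x) f)"

definition Gamma0 :: "('a::real_normed_vector \<Rightarrow> ereal) \<Rightarrow> bool" where
  "Gamma0 f \<longleftrightarrow> proper_fun f \<and> convex_fun f \<and> lsc_fun f"

definition conj :: "('a::real_inner \<Rightarrow> ereal) \<Rightarrow> 'a \<Rightarrow> ereal" where
  "conj f p = (SUP x. ereal (inner p x) - f x)"

definition indicator_fun :: "'a set \<Rightarrow> 'a \<Rightarrow> ereal" where
  "indicator_fun C x = (if x \<in> C then 0 else \<infinity>)"

definition subdiff :: "('a::real_inner \<Rightarrow> ereal) \<Rightarrow> 'a \<Rightarrow> 'a set" where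
  "subdiff f x = {p. x \<in> edom f \<and> (\<forall>y. f x + ereal (inner p (y - x)) \<le> f y)}"

definition one_coercive :: "('a::real_normed_vector \<Rightarrow> ereal) \<Rightarrow> bool" where
  "one_coercive g \<longleftrightarrow> ((\<lambda>x. g x / ereal (norm x)) \<longlongrightarrow> \<infinity>) at_infinity"

definition Legendre :: "('a::euclidean_space \<Rightarrow> ereal) \<Rightarrow> bool" where
  "Legendre f \<longleftrightarrow> Gamma0 f
     \<and> interior (edom f) \<noteq> {}
     \<and> (\<forall>x\<in>interior (edom f). (\<lambda>y. real_of_ereal (f y)) differentiable (at x))
     \<and> (\<forall>x\<in>edom f - interior (edom f). subdiff f x = {})
     \<and> (\<forall>x\<in>interior (edom f). \<exists>D. GDERIV (\<lambda>y. real_of_ereal (f y)) x :> D \<and> subdiff f x = {D})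
     \<and> (\<forall>x\<in>interior (edom f). \<forall>y\<in>interior (edom f). \<forall>u::real.
           x \<noteq> y \<and> 0 < u \<and> u < 1 \<longrightarrow>
           f (u *\<^sub>R x + (1 - u) *\<^sub>R y) < ereal u * f x + ereal (1 - u) * f y)"

definition Sfun :: "('a::euclidean_space \<Rightarrow> ereal) \<Rightarrow> ('a \<Rightarrow> ereal) \<Rightarrow> 'a \<times> real \<Rightarrow> ereal" where
  "Sfun J H = (\<lambda>(x, t).
     if t > 0 then (INF v. J (x - t *\<^sub>R v) + ereal t * conj H v)
     else if t = 0 then conj (\<lambda>p. conj J p + indicator_fun (edom H) p) x
     else \<infinity>)"

end

(*
  For t > 0, S(x,t) = inf_v J(x - t v) + t H*(v) is the primal value of a problem whose dual
  objective is p |-> <p,x> - t H(p) - J*(p), and weak duality bounds S from below by it.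
  Testing the subgradient inequality of (q,E) at the points (z + s v, s) bounds J*(q) as s -> 0
  and gives H(q) <= -E as s -> infinity (via H = H** for H in Gamma0); with weak duality this
  forces E = -H(q) and makes q a dual maximizer. Conversely, a sum rule at a dual maximizer q
  produces b in the subdifferential of H at q with x - t b in dom J; as H is Legendre, b lies in
  int dom H*, so (x,t) is an interior point of dom S. Strict convexity of H makes the maximizer
  unique, and at interior points the convexity of S on t > 0 supplies a subgradient, hence a
  maximizer. At t = 0 the same bounds, together with the biconjugate of J* + I_{dom H} on dom H,
  describe the subdifferential of S(_, 0).
*)

theory Submission
  imports Defs
begin

section \<open>Convex extended-real functions\<close>

definition ereal_convex_on :: "'a::real_vector set \<Rightarrow> ('a \<Rightarrow> ereal) \<Rightarrow> bool" where
  "ereal_convex_on U f \<longleftrightarrow>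
     (\<forall>x\<in>U. \<forall>y\<in>U. \<forall>a b u. f x \<le> ereal a \<longrightarrow> f y \<le> ereal b \<longrightarrow> 0 \<le> u \<longrightarrow> u \<le> 1 \<longrightarrow>
        f ((1 - u) *\<^sub>R x + u *\<^sub>R y) \<le> ereal ((1 - u) * a + u * b))"

lemma ereal_convex_onD:
  "ereal_convex_on U f \<Longrightarrow> x \<in> U \<Longrightarrow> y \<in> U \<Longrightarrow> f x \<le> ereal a \<Longrightarrow> f y \<le> ereal b
    \<Longrightarrow> 0 \<le> u \<Longrightarrow> u \<le> 1 \<Longrightarrow> f ((1 - u) *\<^sub>R x + u *\<^sub>R y) \<le> ereal ((1 - u) * a + u * b)"
  unfolding ereal_convex_on_def by blast

lemma ereal_convex_on_subset: "ereal_convex_on U f \<Longrightarrow> V \<subseteq> U \<Longrightarrow> ereal_convex_on V f"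
  unfolding ereal_convex_on_def by blast

lemma convex_fun_iff_ereal_convex_on_UNIV: "convex_fun f \<longleftrightarrow> ereal_convex_on UNIV f"
proof
  assume "convex_fun f"
  then show "ereal_convex_on UNIV f"
    unfolding ereal_convex_on_def convex_fun_def convex_alt
    by (auto simp: epigraph_def dest!: bspec[of _ _ "(_, _)"])
next
  assume "ereal_convex_on UNIV f"
  then show "convex_fun f"
    unfolding ereal_convex_on_def convex_fun_def convex_alt
    by (auto simp: epigraph_def)
qed

lemma convex_funD:
  "convex_fun f \<Longrightarrow> f x \<le> ereal a \<Longrightarrow> f y \<le> ereal b \<Longrightarrow> 0 \<le> u \<Longrightarrow> u \<le> 1
    \<Longrightarrow> f ((1 - u) *\<^sub>R x + u *\<^sub>R y) \<le> ereal ((1 - u) * a + u * b)"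
  by (simp add: convex_fun_iff_ereal_convex_on_UNIV ereal_convex_onD)

lemma edom_finite: "f x \<noteq> -\<infinity> \<Longrightarrow> x \<in> edom f \<Longrightarrow> \<exists>a. f x = ereal a"
  by (cases "f x") (auto simp: edom_def)

lemma Gamma0_not_MInf: "Gamma0 f \<Longrightarrow> f x \<noteq> -\<infinity>"
  by (simp add: Gamma0_def proper_fun_def)

lemma Gamma0_finite_point:
  assumes "Gamma0 f"
  obtains z a where "f z = ereal a"
proof -
  obtain z where "z \<in> edom f"
    using assms by (auto simp: Gamma0_def proper_fun_def edom_def)
  then show ?thesis
    using that edom_finite[of f z] Gamma0_not_MInf[OF assms] by blast
qed

lemma fenchel_young: "ereal (p \<bullet> x) - f x \<le> conj f p"
  unfolding conj_def by (rule SUP_upper) simp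

lemma Gamma0_conj_not_MInf:
  assumes "Gamma0 f"
  shows "conj f p \<noteq> -\<infinity>"
proof -
  obtain z a where "f z = ereal a"
    using Gamma0_finite_point[OF assms] .
  then have "ereal (p \<bullet> z - a) \<le> conj f p"
    using fenchel_young[of p z f] by simp
  then show ?thesis by auto
qed

lemma conj_le_of_subdiff:
  assumes "b \<in> subdiff f q" "f q = ereal a"
  shows "conj f b \<le> ereal (b \<bullet> q - a)"
  unfolding conj_def
proof (rule SUP_least)
  fix y
  have "f q + ereal (b \<bullet> (y - q)) \<le> f y"
    using assms(1) by (auto simp: subdiff_def)
  then show "ereal (b \<bullet> y) - f y \<le> ereal (b \<bullet> q - a)"
    using assms(2) by (cases "f y") (auto simp: inner_diff_right)
qed

lemma conj_convex_comb:
  assumes "conj f p \<le> ereal a" "conj f q \<le> ereal b" "0 \<le> u" "u \<le> 1"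
  shows "conj f ((1 - u) *\<^sub>R p + u *\<^sub>R q) \<le> ereal ((1 - u) * a + u * b)"
  unfolding conj_def
proof (rule SUP_least)
  fix x
  have pa: "ereal (p \<bullet> x) - f x \<le> ereal a" and qb: "ereal (q \<bullet> x) - f x \<le> ereal b"
    using assms(1,2) fenchel_young order_trans by blast+
  show "ereal (((1 - u) *\<^sub>R p + u *\<^sub>R q) \<bullet> x) - f x \<le> ereal ((1 - u) * a + u * b)"
  proof (cases "f x")
    case (real c)
    have "(1 - u) * (p \<bullet> x - c) \<le> (1 - u) * a" "u * (q \<bullet> x - c) \<le> u * b"
      using pa qb real assms(3,4) by (auto intro: mult_left_mono)
    then show ?thesis
      using real by (simp add: inner_add_left algebra_simps)
  qed (use pa in auto)
qed

section \<open>Affine minorants and the biconjugate\<close>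

lemma lsc_not_in_closure_epigraph:
  fixes f :: "'a::euclidean_space \<Rightarrow> ereal"
  assumes lsc: "f p \<le> Liminf (at p) f" and r: "ereal r < f p"
  shows "(p, r) \<notin> closure (epigraph f)"
proof
  assume pin: "(p, r) \<in> closure (epigraph f)"
  obtain r' where r': "ereal r < ereal r'" "ereal r' < f p"
    using ereal_dense2[OF r] by blast
  have "eventually (\<lambda>y. ereal r' < f y) (at p)"
    using lsc r'(2) by (simp add: le_Liminf_iff)
  then obtain d where d: "d > 0" "\<And>y. y \<noteq> p \<Longrightarrow> dist y p < d \<Longrightarrow> ereal r' < f y"
    by (auto simp: eventually_at)
  have near: "ereal r' < f y" if "dist p y < d" for y
    using d(2)[of y] r'(2) that by (cases "y = p") (auto simp: dist_commute)
  let ?U = "ball p d \<times> {..<r'}"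
  have "?U \<inter> epigraph f = {}"
  proof (rule ccontr)
    assume "?U \<inter> epigraph f \<noteq> {}"
    then obtain y \<rho> where "dist p y < d" "\<rho> < r'" "f y \<le> ereal \<rho>"
      by (auto simp: epigraph_def)
    then show False
      using near[of y] by (meson ereal_less_eq(3) less_le_not_le order.trans)
  qed
  then have "?U \<inter> closure (epigraph f) = {}"
    by (simp add: open_Int_closure_eq_empty open_Times)
  moreover have "(p, r) \<in> ?U"
    using d r' by auto
  ultimately show False
    using pin by blast
qed

lemma separate_point_below_epigraph:
  fixes f :: "'a::euclidean_space \<Rightarrow> ereal"
  assumes cvx: "convex_fun f" and lsc: "f p \<le> Liminf (at p) f" and r: "ereal r < f p"
  shows "\<exists>a \<beta> b. (\<forall>y \<rho>. f y \<le> ereal \<rho> \<longrightarrow> b < a \<bullet> y + \<beta> * \<rho>) \<and> a \<bullet> p + \<beta> * r < b"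
proof -
  have "convex (closure (epigraph f))"
    using cvx by (simp add: convex_fun_def convex_closure)
  then obtain w b where wb: "w \<bullet> (p, r) < b" "\<forall>z\<in>closure (epigraph f). b < w \<bullet> z"
    using separating_hyperplane_closed_point[OF _ closed_closure lsc_not_in_closure_epigraph[OF lsc r]]
    by blast
  obtain a \<beta> where w: "w = (a, \<beta>)"
    by (cases w)
  have "b < a \<bullet> y + \<beta> * \<rho>" if "f y \<le> ereal \<rho>" for y \<rho>
  proof -
    have "(y, \<rho>) \<in> closure (epigraph f)"
      using that closure_subset[of "epigraph f"] by (auto simp: epigraph_def)
    then show ?thesis
      using wb(2) w by (auto simp: inner_Pair inner_real_def)
  qed
  moreover have "a \<bullet> p + \<beta> * r < b"
    using wb(1) w by (simp add: inner_Pair inner_real_def)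
  ultimately show ?thesis
    by blast
qed

lemma nonvertical_separation_affine_minorant:
  fixes f :: "'a::real_inner \<Rightarrow> ereal"
  assumes \<beta>: "\<beta> > 0" and above: "\<And>y \<rho>. f y \<le> ereal \<rho> \<Longrightarrow> b < a \<bullet> y + \<beta> * \<rho>"
    and below: "a \<bullet> p + \<beta> * r < b"
  shows "\<exists>a' c. (\<forall>y. ereal (a' \<bullet> y + c) \<le> f y) \<and> r < a' \<bullet> p + c"
proof (intro exI conjI allI)
  fix y
  show "ereal ((- (1 / \<beta>) *\<^sub>R a) \<bullet> y + b / \<beta>) \<le> f y"
  proof (cases "f y")
    case (real \<rho>)
    then have "(b - a \<bullet> y) / \<beta> < \<rho>"
      using above[of y \<rho>] \<beta> by (simp add: pos_divide_less_eq algebra_simps)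
    then show ?thesis
      using real \<beta> by (simp add: diff_divide_distrib)
  next
    case MInf
    define \<rho> where "\<rho> = (b - a \<bullet> y) / \<beta> - 1"
    have "\<beta> * \<rho> = b - a \<bullet> y - \<beta>"
      using \<beta> by (simp add: \<rho>_def field_simps)
    then show ?thesis
      using above[of y \<rho>] MInf \<beta> by simp
  qed simp
next
  show "r < (- (1 / \<beta>) *\<^sub>R a) \<bullet> p + b / \<beta>"
    using below \<beta> by (simp add: pos_less_divide_eq algebra_simps diff_divide_distrib[symmetric])
qed

text \<open>A vertical hyperplane separating \<open>p\<close> from the domain lets any affine minorant be tilted
  until it exceeds \<open>r\<close> at \<open>p\<close>.\<close>

lemma vertical_separation_affine_minorant:
  fixes f :: "'a::real_inner \<Rightarrow> ereal"
  assumes minorant: "\<forall>y. ereal (a1 \<bullet> y + c1) \<le> f y"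
    and above: "\<And>y \<rho>. f y \<le> ereal \<rho> \<Longrightarrow> b < a \<bullet> y" and below: "a \<bullet> p < b"
  shows "\<exists>a' c. (\<forall>y. ereal (a' \<bullet> y + c) \<le> f y) \<and> r < a' \<bullet> p + c"
proof -
  define k where "k = (\<bar>r - a1 \<bullet> p - c1\<bar> + 1) / (b - a \<bullet> p)"
  have k: "k > 0" "k * (b - a \<bullet> p) = \<bar>r - a1 \<bullet> p - c1\<bar> + 1"
    using below by (simp_all add: k_def)
  show ?thesis
  proof (intro exI conjI allI)
    fix y
    show "ereal ((a1 - k *\<^sub>R a) \<bullet> y + (c1 + k * b)) \<le> f y"
    proof (cases "f y")
      case (real \<rho>)
      then have "k * b \<le> k * (a \<bullet> y)"
        using above[of y \<rho>] k by simp
      then have "(a1 - k *\<^sub>R a) \<bullet> y + (c1 + k * b) \<le> a1 \<bullet> y + c1"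
        by (simp add: inner_diff_left)
      then show ?thesis
        using minorant[rule_format, of y] real by simp
    next
      case MInf
      then show ?thesis
        using minorant[rule_format, of y] by simp
    qed simp
  next
    show "r < (a1 - k *\<^sub>R a) \<bullet> p + (c1 + k * b)"
      using k by (simp add: inner_diff_left algebra_simps)
  qed
qed

lemma lsc_convex_affine_minorant:
  fixes f :: "'a::euclidean_space \<Rightarrow> ereal"
  assumes cvx: "convex_fun f" and lsc: "f p \<le> Liminf (at p) f" and fp: "f p = ereal c" and r: "r < c"
  shows "\<exists>a c. (\<forall>y. ereal (a \<bullet> y + c) \<le> f y) \<and> r < a \<bullet> p + c"
proof -
  have "ereal r < f p"
    using fp r by simp
  then obtain a \<beta> b where above: "\<And>y \<rho>. f y \<le> ereal \<rho> \<Longrightarrow> b < a \<bullet> y + \<beta> * \<rho>"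
      and below: "a \<bullet> p + \<beta> * r < b"
    using separate_point_below_epigraph[OF cvx lsc] by blast
  have "\<beta> * (c - r) > 0"
    using above[of p c] below fp by (simp add: algebra_simps)
  then have "\<beta> > 0"
    using r by (simp add: zero_less_mult_iff)
  then show ?thesis
    using nonvertical_separation_affine_minorant above below by blast
qed

lemma Gamma0_affine_minorant:
  fixes f :: "'a::euclidean_space \<Rightarrow> ereal"
  assumes f: "Gamma0 f" and r: "ereal r < f p"
  shows "\<exists>a c. (\<forall>y. ereal (a \<bullet> y + c) \<le> f y) \<and> r < a \<bullet> p + c"
proof -
  have cvx: "convex_fun f" and lsc: "\<And>x. f x \<le> Liminf (at x) f"
    using f by (auto simp: Gamma0_def lsc_fun_def)
  show ?thesis
  proof (cases "f p")
    case (real c)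
    then show ?thesis
      using lsc_convex_affine_minorant[OF cvx lsc] r by simp
  next
    case MInf
    then show ?thesis
      using Gamma0_not_MInf[OF f] by simp
  next
    case PInf
    obtain p0 c0 where c0: "f p0 = ereal c0"
      using Gamma0_finite_point[OF f] .
    obtain a1 c1 where minorant: "\<forall>y. ereal (a1 \<bullet> y + c1) \<le> f y"
      using lsc_convex_affine_minorant[OF cvx lsc c0, of "c0 - 1"] by auto
    obtain a \<beta> b where above: "\<And>y \<rho>. f y \<le> ereal \<rho> \<Longrightarrow> b < a \<bullet> y + \<beta> * \<rho>"
        and below: "a \<bullet> p + \<beta> * r < b"
      using separate_point_below_epigraph[OF cvx lsc r] by blast
    have "\<beta> \<ge> 0"
    proof (rule ccontr)
      assume "\<not> \<beta> \<ge> 0"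
      define \<rho> where "\<rho> = c0 + (\<bar>a \<bullet> p0 + \<beta> * c0 - b\<bar> + 1) / (- \<beta>)"
      have "(\<bar>a \<bullet> p0 + \<beta> * c0 - b\<bar> + 1) / (- \<beta>) > 0"
        using \<open>\<not> \<beta> \<ge> 0\<close> by (intro divide_pos_pos) auto
      then have "\<rho> \<ge> c0"
        by (simp add: \<rho>_def)
      then have "b < a \<bullet> p0 + \<beta> * \<rho>"
        using above[of p0 \<rho>] c0 by simp
      moreover have "\<beta> * \<rho> = \<beta> * c0 - (\<bar>a \<bullet> p0 + \<beta> * c0 - b\<bar> + 1)"
        using \<open>\<not> \<beta> \<ge> 0\<close> by (simp add: \<rho>_def field_simps)
      ultimately show False
        by linarith
    qed
    show ?thesis
    proof (cases "\<beta> > 0")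
      case True
      then show ?thesis
        using nonvertical_separation_affine_minorant above below by blast
    next
      case False
      with \<open>\<beta> \<ge> 0\<close> have "\<beta> = 0"
        by simp
      then have "\<And>y \<rho>. f y \<le> ereal \<rho> \<Longrightarrow> b < a \<bullet> y" "a \<bullet> p < b"
        using above below by auto
      then show ?thesis
        by (rule vertical_separation_affine_minorant[OF minorant])
    qed
  qed
qed

lemma affine_minorant_less_biconj:
  assumes minorant: "\<forall>y. ereal (a \<bullet> y + c) \<le> f y" and r: "r < a \<bullet> p + c"
  shows "ereal r < conj (conj f) p"
proof -
  have "conj f a \<le> ereal (- c)"
    unfolding conj_def
  proof (rule SUP_least)
    fix x
    show "ereal (a \<bullet> x) - f x \<le> ereal (- c)"
      using minorant[rule_format, of x] by (cases "f x") auto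
  qed
  then have "ereal (p \<bullet> a) - ereal (- c) \<le> ereal (p \<bullet> a) - conj f a"
    by (intro ereal_minus_mono) auto
  also have "\<dots> \<le> conj (conj f) p"
    by (rule fenchel_young)
  finally have "ereal (a \<bullet> p + c) \<le> conj (conj f) p"
    by (simp add: inner_commute)
  moreover have "ereal r < ereal (a \<bullet> p + c)"
    using r by simp
  ultimately show ?thesis
    by (rule order_less_le_trans[rotated])
qed

lemma Gamma0_le_biconj:
  fixes f :: "'a::euclidean_space \<Rightarrow> ereal"
  assumes "Gamma0 f"
  shows "f p \<le> conj (conj f) p"
proof (rule ccontr)
  assume "\<not> f p \<le> conj (conj f) p"
  then obtain r where "conj (conj f) p < ereal r" "ereal r < f p"
    using ereal_dense2 by (metis not_le)
  with Gamma0_affine_minorant[OF assms] affine_minorant_less_biconj show False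
    by (meson not_less_iff_gr_or_eq)
qed

lemma one_coercive_conj_finite:
  fixes f :: "'a::euclidean_space \<Rightarrow> ereal"
  assumes f: "Gamma0 f" and coercive: "one_coercive f"
  shows "conj f p < \<infinity>"
proof -
  obtain z b where "f z = ereal b"
    using Gamma0_finite_point[OF f] .
  moreover have "convex_fun f" "f z \<le> Liminf (at z) f"
    using f by (auto simp: Gamma0_def lsc_fun_def)
  ultimately obtain a c where minorant: "\<forall>y. ereal (a \<bullet> y + c) \<le> f y"
    using lsc_convex_affine_minorant[of f z b "b - 1"] by auto
  have "eventually (\<lambda>x. ereal (norm p + 1) < f x / ereal (norm x)) at_infinity"
    using coercive unfolding one_coercive_def tendsto_PInfty by blast
  then obtain R where R: "\<And>x. R \<le> norm x \<Longrightarrow> ereal (norm p + 1) < f x / ereal (norm x)"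
    unfolding eventually_at_infinity by blast
  define R' where "R' = max R 1"
  define K where "K = max 0 ((norm p + norm a) * R' + \<bar>c\<bar>)"
  have "conj f p \<le> ereal K"
    unfolding conj_def
  proof (rule SUP_least)
    fix x
    show "ereal (p \<bullet> x) - f x \<le> ereal K"
    proof (cases "R' \<le> norm x")
      case True
      then have nx: "norm x > 0" "R \<le> norm x"
        by (auto simp: R'_def)
      show ?thesis
      proof (cases "f x")
        case (real \<phi>)
        have "norm p + 1 < \<phi> / norm x"
          using R[OF nx(2)] real nx by simp
        then have "norm p * norm x + norm x < \<phi>"
          using nx by (simp add: pos_less_divide_eq distrib_right)
        moreover have "p \<bullet> x \<le> norm p * norm x"
          by (simp add: norm_cauchy_schwarz)
        ultimately have "p \<bullet> x - \<phi> \<le> 0"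
          using nx(1) by linarith
        then show ?thesis
          using real by (auto simp: K_def le_max_iff_disj)
      qed (use Gamma0_not_MInf[OF f] in auto)
    next
      case False
      then have bound: "\<bar>v \<bullet> x\<bar> \<le> norm v * R'" for v
        using Cauchy_Schwarz_ineq2[of v x] mult_left_mono[of "norm x" R' "norm v"] by simp
      have "ereal (p \<bullet> x) - f x \<le> ereal (p \<bullet> x) - ereal (a \<bullet> x + c)"
        using minorant by (intro ereal_minus_mono) auto
      also have "\<dots> \<le> ereal K"
        using bound[of a] bound[of p] unfolding K_def by (simp add: distrib_right)
      finally show ?thesis .
    qed
  qed
  then show ?thesis
    by auto
qed

section \<open>A sum rule at a minimizer\<close>

lemma convex_shifted_epigraph:
  assumes "ereal_convex_on U f" "convex U"
  shows "convex {(y, r). y \<in> U \<and> f y \<le> ereal (a + r)}"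
  unfolding convex_alt
proof (intro ballI allI impI)
  fix p1 p2 :: "'a \<times> real" and u :: real
  assume p: "p1 \<in> {(y, r). y \<in> U \<and> f y \<le> ereal (a + r)}" "p2 \<in> {(y, r). y \<in> U \<and> f y \<le> ereal (a + r)}"
    and u: "0 \<le> u \<and> u \<le> 1"
  obtain y1 r1 y2 r2 where pp: "p1 = (y1, r1)" "p2 = (y2, r2)"
    by (cases p1, cases p2)
  have "f ((1 - u) *\<^sub>R y1 + u *\<^sub>R y2) \<le> ereal ((1 - u) * (a + r1) + u * (a + r2))"
    using p u pp by (intro ereal_convex_onD[OF assms(1)]) auto
  moreover have "(1 - u) *\<^sub>R y1 + u *\<^sub>R y2 \<in> U"
    using p u pp assms(2) by (auto simp: convex_alt)
  ultimately show "(1 - u) *\<^sub>R p1 + u *\<^sub>R p2 \<in> {(y, r). y \<in> U \<and> f y \<le> ereal (a + r)}"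
    using pp by (simp add: algebra_simps)
qed

lemma convex_on_strict_hypograph:
  assumes g: "convex_on UNIV g"
  shows "convex {(y, r). r + g y < c}"
  unfolding convex_def
proof (clarsimp)
  fix y1 r1 y2 r2 and u v :: real
  assume r: "r1 + g y1 < c" "r2 + g y2 < c" and uv: "0 \<le> u" "0 \<le> v" "u + v = 1"
  have "g (u *\<^sub>R y1 + v *\<^sub>R y2) \<le> u * g y1 + v * g y2"
    using convex_onD[OF g, of v y1 y2] uv by (simp add: eq_diff_eq[symmetric])
  moreover have "u * (r1 + g y1) + v * (r2 + g y2) < c"
    using convex_bound_lt[OF r uv] .
  ultimately show "u * r1 + v * r2 + g (u *\<^sub>R y1 + v *\<^sub>R y2) < c"
    by (simp add: algebra_simps)
qed

text \<open>At a minimizer \<open>q\<close> of \<open>f + g\<close>, the graph of \<open>f - f q\<close> lies above that of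
  \<open>g q - g\<close>, and a hyperplane separates them; it cannot be vertical because \<open>g\<close> is finite.\<close>

lemma convex_sum_min_separation:
  fixes f :: "'a::euclidean_space \<Rightarrow> ereal" and g :: "'a \<Rightarrow> real"
  assumes cvx: "convex_fun f" and nm: "\<And>y. f y \<noteq> -\<infinity>" and g: "convex_on UNIV g"
    and fq: "f q = ereal a" and min: "\<And>y b. f y = ereal b \<Longrightarrow> a + g q \<le> b + g y"
  shows "\<exists>d \<gamma> b0. \<gamma> > 0 \<and> (\<forall>y r. f y \<le> ereal (a + r) \<longrightarrow> d \<bullet> y - \<gamma> * r \<le> b0)
    \<and> (\<forall>y r. r + g y < g q \<longrightarrow> b0 \<le> d \<bullet> y - \<gamma> * r)"
proof -
  define A where "A = {(y, r). y \<in> UNIV \<and> f y \<le> ereal (a + r)}"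
  define T where "T = {(y, r). r + g y < g q}"
  have "convex A"
    unfolding A_def
    by (rule convex_shifted_epigraph) (use cvx in \<open>simp_all add: convex_fun_iff_ereal_convex_on_UNIV\<close>)
  moreover have "convex T"
    unfolding T_def using g by (rule convex_on_strict_hypograph)
  moreover have "(q, 0) \<in> A" "(q, -1) \<in> T"
    using fq by (simp_all add: A_def T_def)
  moreover have "A \<inter> T = {}"
  proof (safe)
    fix y r
    assume "(y, r) \<in> A" "(y, r) \<in> T"
    then obtain b where "f y = ereal b" "b \<le> a + r" "r + g y < g q"
      using nm[of y] by (cases "f y") (auto simp: A_def T_def)
    then show "(y, r) \<in> {}"
      using min by fastforce
  qed
  ultimately obtain w b0 where w0: "w \<noteq> 0" and wA: "\<forall>p\<in>A. w \<bullet> p \<le> b0" and wT: "\<forall>p\<in>T. b0 \<le> w \<bullet> p"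
    using separating_hyperplane_sets[of A T] by blast
  obtain d \<beta> where w: "w = (d, \<beta>)"
    by (cases w)
  have hA: "d \<bullet> y + \<beta> * r \<le> b0" if "f y \<le> ereal (a + r)" for y r
    using wA that w by (auto simp: A_def inner_Pair inner_real_def)
  have hT: "b0 \<le> d \<bullet> y + \<beta> * r" if "r + g y < g q" for y r
    using wT that w by (auto simp: T_def inner_Pair inner_real_def)
  have "\<beta> < 0"
  proof (rule ccontr)
    assume "\<not> \<beta> < 0"
    show False
    proof (cases "\<beta> = 0")
      case True
      then have "d \<bullet> d > 0"
        using w0 w by (auto simp: zero_prod_def)
      moreover have "b0 \<le> d \<bullet> (q - d)"
        using hT[of "g q - g (q - d) - 1" "q - d"] True by simp
      moreover have "d \<bullet> q \<le> b0"
        using hA[of q 0] fq True by simp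
      ultimately show False
        unfolding inner_diff_right by linarith
    next
      case False
      with \<open>\<not> \<beta> < 0\<close> have "\<beta> > 0"
        by simp
      define r where "r = (\<bar>b0 - d \<bullet> q\<bar> + 1) / \<beta>"
      have "r \<ge> 0" "\<beta> * r = \<bar>b0 - d \<bullet> q\<bar> + 1"
        using \<open>\<beta> > 0\<close> by (simp_all add: r_def)
      then show False
        using hA[of q r] fq by simp
    qed
  qed
  then show ?thesis
    using hA hT by (intro exI[of _ d] exI[of _ "- \<beta>"] exI[of _ b0]) auto
qed

lemma convex_sum_min_subgradient:
  fixes f :: "'a::euclidean_space \<Rightarrow> ereal" and g :: "'a \<Rightarrow> real"
  assumes cvx: "convex_fun f" and nm: "\<And>y. f y \<noteq> -\<infinity>" and g: "convex_on UNIV g"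
    and fq: "f q = ereal a" and min: "\<And>y b. f y = ereal b \<Longrightarrow> a + g q \<le> b + g y"
  shows "\<exists>c. c \<in> subdiff f q \<and> (\<forall>y. g q - c \<bullet> (y - q) \<le> g y)"
proof -
  obtain d \<gamma> b0 where \<gamma>: "\<gamma> > 0"
    and hA: "\<And>y r. f y \<le> ereal (a + r) \<Longrightarrow> d \<bullet> y - \<gamma> * r \<le> b0"
    and hT: "\<And>y r. r + g y < g q \<Longrightarrow> b0 \<le> d \<bullet> y - \<gamma> * r"
    using convex_sum_min_separation[OF cvx nm g fq min] by blast
  define c where "c = (1 / \<gamma>) *\<^sub>R d"
  define L where "L y = (d \<bullet> y - b0) / \<gamma>" for y
  have LA: "L y \<le> r" if "f y \<le> ereal (a + r)" for y r
    using hA[OF that] \<gamma> by (simp add: L_def pos_divide_le_eq mult.commute)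
  have LT: "g q - g y \<le> L y" for y
  proof (rule dense_le)
    fix r
    assume "r < g q - g y"
    then have "b0 \<le> d \<bullet> y - \<gamma> * r"
      using hT[of r y] by (simp add: algebra_simps)
    then show "r \<le> L y"
      using \<gamma> by (simp add: L_def pos_le_divide_eq mult.commute)
  qed
  have "L q = 0"
    using LA[of q 0] LT[of q] fq by simp
  then have "b0 = d \<bullet> q"
    using \<gamma> by (simp add: L_def)
  then have Lc: "L y = c \<bullet> (y - q)" for y
    by (simp add: L_def c_def inner_diff_right diff_divide_distrib)
  show ?thesis
  proof (intro exI conjI allI)
    show "c \<in> subdiff f q"
      unfolding subdiff_def
    proof (intro CollectI conjI allI)
      show "q \<in> edom f"
        using fq by (simp add: edom_def)
      fix y
      show "f q + ereal (c \<bullet> (y - q)) \<le> f y"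
      proof (cases "f y")
        case (real b)
        then show ?thesis
          using LA[of y "b - a"] Lc[of y] fq by simp
      qed (use nm in auto)
    qed
    show "g q - c \<bullet> (y - q) \<le> g y" for y
      using LT[of y] Lc[of y] by simp
  qed
qed

section \<open>Legendre functions\<close>

lemma Legendre_Gamma0: "Legendre f \<Longrightarrow> Gamma0 f"
  by (simp add: Legendre_def)

lemma Legendre_subdiff_interior:
  assumes "Legendre f" "b \<in> subdiff f x"
  shows "x \<in> interior (edom f)"
proof -
  have "x \<in> edom f"
    using assms(2) by (simp add: subdiff_def)
  moreover have "\<forall>x\<in>edom f - interior (edom f). subdiff f x = {}"
    using assms(1) by (simp add: Legendre_def)
  ultimately show ?thesis
    using assms(2) by blast
qed

lemma Legendre_midpoint_less:
  assumes "Legendre f" "x \<in> interior (edom f)" "y \<in> interior (edom f)" "x \<noteq> y"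
    and "f x = ereal a" "f y = ereal b"
  shows "f ((1/2) *\<^sub>R x + (1/2) *\<^sub>R y) < ereal ((a + b) / 2)"
proof -
  have "\<forall>x\<in>interior (edom f). \<forall>y\<in>interior (edom f). \<forall>u::real. x \<noteq> y \<and> 0 < u \<and> u < 1 \<longrightarrow>
      f (u *\<^sub>R x + (1 - u) *\<^sub>R y) < ereal u * f x + ereal (1 - u) * f y"
    using assms(1) unfolding Legendre_def by (elim conjE)
  from this[rule_format, of x y "1/2"] show ?thesis
    using assms(2-) by (simp add: add_divide_distrib)
qed

lemma Legendre_continuous_at:
  assumes "Legendre f" "x \<in> interior (edom f)"
  shows "isCont (\<lambda>y. real_of_ereal (f y)) x"
proof -
  have "\<forall>x\<in>interior (edom f). (\<lambda>y. real_of_ereal (f y)) differentiable (at x)"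
    using assms(1) unfolding Legendre_def by (elim conjE)
  then show ?thesis
    using assms(2) differentiable_imp_continuous_within by blast
qed

lemma Legendre_conj_finite_point:
  assumes "Legendre f"
  obtains v c where "conj f v = ereal c"
proof -
  have "interior (edom f) \<noteq> {}"
    and "\<forall>x\<in>interior (edom f). \<exists>D. GDERIV (\<lambda>y. real_of_ereal (f y)) x :> D \<and> subdiff f x = {D}"
    using assms by (auto simp: Legendre_def)
  then obtain q D where q: "q \<in> interior (edom f)" and D: "D \<in> subdiff f q"
    by blast
  obtain a where a: "f q = ereal a"
    using q interior_subset edom_finite[of f q] Gamma0_not_MInf[OF Legendre_Gamma0[OF assms]] by blast
  have "conj f D \<le> ereal (D \<bullet> q - a)"
    using conj_le_of_subdiff[OF D a] .
  then show ?thesis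
    using that Gamma0_conj_not_MInf[OF Legendre_Gamma0[OF assms], of D] by (cases "conj f D") auto
qed

text \<open>Strict convexity is only available in the interior, so the competitor \<open>y\<close> is first
  pulled towards \<open>q\<close> along the segment before taking a midpoint.\<close>

lemma Legendre_subgradient_strict:
  assumes L: "Legendre f" and b: "b \<in> subdiff f q" and fq: "f q = ereal a"
    and fy: "f y = ereal c" and "y \<noteq> q"
  shows "a - b \<bullet> q < c - b \<bullet> y"
proof -
  have cvx: "convex_fun f" and nm: "\<And>x. f x \<noteq> -\<infinity>"
    using Legendre_Gamma0[OF L] by (auto simp: Gamma0_def Gamma0_not_MInf)
  have sub: "a - b \<bullet> q \<le> c' - b \<bullet> z" if "f z = ereal c'" for z c'
  proof -
    have "f q + ereal (b \<bullet> (z - q)) \<le> f z"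
      using b by (simp add: subdiff_def)
    then show ?thesis
      using that fq by (simp add: inner_diff_right)
  qed
  have qi: "q \<in> interior (edom f)"
    using Legendre_subdiff_interior[OF L b] .
  obtain R where R: "R > 0" "ball q R \<subseteq> interior (edom f)"
    using qi open_contains_ball open_interior by blast
  show ?thesis
  proof (rule ccontr)
    assume "\<not> ?thesis"
    then have eq: "c - b \<bullet> y = a - b \<bullet> q"
      using sub[OF fy] by simp
    define \<epsilon> where "\<epsilon> = min (1/2) (R / (2 * (norm (y - q) + 1)))"
    have "R / (2 * (norm (y - q) + 1)) > 0"
      using R by (simp add: add_nonneg_pos)
    then have \<epsilon>: "\<epsilon> > 0" "\<epsilon> \<le> 1/2"
      unfolding \<epsilon>_def by (auto simp: min_def)
    define r where "r = (1 - \<epsilon>) *\<^sub>R q + \<epsilon> *\<^sub>R y"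
    have rq: "r - q = \<epsilon> *\<^sub>R (y - q)"
      by (simp add: r_def algebra_simps)
    have "norm (r - q) = \<epsilon> * norm (y - q)"
      using \<epsilon> rq by simp
    also have "\<dots> \<le> (R / (2 * (norm (y - q) + 1))) * norm (y - q)"
      by (intro mult_right_mono) (auto simp: \<epsilon>_def)
    also have "\<dots> = R * (norm (y - q) / (2 * (norm (y - q) + 1)))"
      by simp
    also have "\<dots> < R"
      using R by (simp add: divide_less_eq) (smt (verit) norm_ge_zero)
    finally have ri: "r \<in> interior (edom f)"
      using R by (auto simp: dist_norm norm_minus_commute)
    have "r \<noteq> q"
      using rq \<epsilon> \<open>y \<noteq> q\<close> by auto
    obtain d where fr: "f r = ereal d"
      using ri interior_subset edom_finite[of f, OF nm] by blast
    have "f r \<le> ereal ((1 - \<epsilon>) * a + \<epsilon> * c)"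
      unfolding r_def by (rule convex_funD[OF cvx]) (use fq fy \<epsilon> in auto)
    then have "d - b \<bullet> r \<le> (1 - \<epsilon>) * (a - b \<bullet> q) + \<epsilon> * (c - b \<bullet> y)"
      using fr by (simp add: r_def inner_add_right algebra_simps)
    then have dr: "d - b \<bullet> r \<le> a - b \<bullet> q"
      using eq by (simp add: algebra_simps)
    define m where "m = (1/2) *\<^sub>R q + (1/2) *\<^sub>R r"
    have "f m < ereal ((a + d) / 2)"
      unfolding m_def by (rule Legendre_midpoint_less[OF L qi ri]) (use \<open>r \<noteq> q\<close> fq fr in auto)
    then obtain e where fm: "f m = ereal e" "e < (a + d) / 2"
      using nm[of m] by (cases "f m") auto
    have "2 * e - 2 * (b \<bullet> m) < (a - b \<bullet> q) + (d - b \<bullet> r)"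
      using fm by (simp add: m_def inner_add_right field_simps)
    then show False
      using sub[OF fm(1)] dr by linarith
  qed
qed

text \<open>Compactness of the sphere gives a positive gap between the minimum of \<open>f - \<langle>b, _\<rangle>\<close> on
  it and the value at \<open>q\<close>; convexity along rays from \<open>q\<close> turns this gap into linear growth.\<close>

lemma strict_min_linear_growth:
  fixes f :: "'a::euclidean_space \<Rightarrow> ereal"
  assumes cvx: "convex_fun f" and nm: "\<And>y. f y \<noteq> -\<infinity>" and fq: "f q = ereal a"
    and r0: "r0 > 0" and sphere: "sphere q r0 \<subseteq> edom f"
    and cont: "continuous_on (sphere q r0) (\<lambda>y. real_of_ereal (f y))"
    and strict: "\<And>y c. f y = ereal c \<Longrightarrow> y \<noteq> q \<Longrightarrow> a - b \<bullet> q < c - b \<bullet> y"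
  shows "\<exists>\<delta>>0. \<forall>y c. f y = ereal c \<longrightarrow> r0 \<le> norm (y - q) \<longrightarrow> a - b \<bullet> q + \<delta> * norm (y - q) \<le> c - b \<bullet> y"
proof -
  define G where "G y = real_of_ereal (f y) - b \<bullet> y" for y
  have Gc: "G y = c - b \<bullet> y" if "f y = ereal c" for y c
    using that by (simp add: G_def)
  have "continuous_on (sphere q r0) G"
    unfolding G_def by (intro continuous_intros cont)
  then obtain ym where ym: "ym \<in> sphere q r0" "\<And>y. y \<in> sphere q r0 \<Longrightarrow> G ym \<le> G y"
    using continuous_attains_inf[of "sphere q r0" G] r0 by auto
  obtain cm where "f ym = ereal cm"
    using ym(1) sphere edom_finite[of f, OF nm] by blast
  moreover have "ym \<noteq> q"
    using ym r0 by auto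
  ultimately have m0: "G ym > a - b \<bullet> q"
    using strict Gc by simp
  define \<delta> where "\<delta> = (G ym - (a - b \<bullet> q)) / r0"
  show ?thesis
  proof (intro exI[of _ \<delta>] conjI allI impI)
    show "\<delta> > 0"
      using m0 r0 by (simp add: \<delta>_def)
    fix y c
    assume fy: "f y = ereal c" and far: "r0 \<le> norm (y - q)"
    define n where "n = norm (y - q)"
    have n: "n > 0" "n \<ge> r0"
      using far r0 by (auto simp: n_def)
    define \<mu> where "\<mu> = r0 / n"
    have \<mu>: "\<mu> > 0" "\<mu> \<le> 1"
      using n r0 by (auto simp: \<mu>_def)
    define w where "w = (1 - \<mu>) *\<^sub>R q + \<mu> *\<^sub>R y"
    have "w - q = \<mu> *\<^sub>R (y - q)"
      by (simp add: w_def algebra_simps)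
    then have "norm (w - q) = r0"
      using \<mu> n r0 by (simp add: \<mu>_def n_def)
    then have wK: "w \<in> sphere q r0"
      by (simp add: dist_norm norm_minus_commute)
    obtain cw where fw: "f w = ereal cw"
      using wK sphere edom_finite[of f, OF nm] by blast
    have "f w \<le> ereal ((1 - \<mu>) * a + \<mu> * c)"
      unfolding w_def by (rule convex_funD[OF cvx]) (use fq fy \<mu> in auto)
    then have "cw - b \<bullet> w \<le> (1 - \<mu>) * (a - b \<bullet> q) + \<mu> * (c - b \<bullet> y)"
      using fw by (simp add: w_def inner_add_right algebra_simps)
    moreover have "G ym \<le> cw - b \<bullet> w"
      using ym(2)[OF wK] Gc[OF fw] by simp
    ultimately have "\<mu> * ((c - b \<bullet> y) - (a - b \<bullet> q)) \<ge> G ym - (a - b \<bullet> q)"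
      by (simp add: algebra_simps)
    then have "(c - b \<bullet> y) - (a - b \<bullet> q) \<ge> (G ym - (a - b \<bullet> q)) / \<mu>"
      using \<mu> by (simp add: pos_divide_le_eq mult.commute)
    moreover have "(G ym - (a - b \<bullet> q)) / \<mu> = \<delta> * n"
      using r0 n by (simp add: \<delta>_def \<mu>_def field_simps)
    ultimately show "a - b \<bullet> q + \<delta> * norm (y - q) \<le> c - b \<bullet> y"
      by (simp add: n_def)
  qed
qed

lemma linear_growth_conj_interior:
  fixes f :: "'a::real_inner \<Rightarrow> ereal"
  assumes nm: "\<And>y. f y \<noteq> -\<infinity>" and r0: "r0 > 0" and \<delta>: "\<delta> > 0"
    and sub: "\<And>y c. f y = ereal c \<Longrightarrow> a - b \<bullet> q \<le> c - b \<bullet> y"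
    and growth: "\<And>y c. f y = ereal c \<Longrightarrow> r0 \<le> norm (y - q) \<Longrightarrow> a - b \<bullet> q + \<delta> * norm (y - q) \<le> c - b \<bullet> y"
  shows "b \<in> interior (edom (conj f))"
proof -
  have "ball b \<delta> \<subseteq> edom (conj f)"
  proof
    fix v
    assume v: "v \<in> ball b \<delta>"
    define u where "u = v - b"
    have nu: "norm u < \<delta>"
      using v by (simp add: u_def dist_norm norm_minus_commute)
    define M where "M = u \<bullet> q - (a - b \<bullet> q) + \<delta> * r0"
    have "conj f v \<le> ereal M"
      unfolding conj_def
    proof (rule SUP_least)
      fix y
      show "ereal (v \<bullet> y) - f y \<le> ereal M"
      proof (cases "f y")
        case (real c)
        have split: "v \<bullet> y - c = u \<bullet> q + u \<bullet> (y - q) - (c - b \<bullet> y)"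
          by (simp add: u_def inner_diff_left inner_diff_right)
        have cs: "u \<bullet> (y - q) \<le> norm u * norm (y - q)"
          by (simp add: norm_cauchy_schwarz)
        have "v \<bullet> y - c \<le> M"
        proof (cases "r0 \<le> norm (y - q)")
          case True
          have "norm u * norm (y - q) \<le> \<delta> * norm (y - q)"
            using nu by (simp add: mult_right_mono)
          moreover have "\<delta> * r0 > 0"
            using \<delta> r0 by simp
          ultimately show ?thesis
            using split cs growth[OF real True] by (simp add: M_def)
        next
          case False
          have "norm u * norm (y - q) \<le> \<delta> * r0"
            using nu False \<delta> by (intro mult_mono) auto
          then show ?thesis
            using split cs sub[OF real] by (simp add: M_def)
        qed
        then show ?thesis
          using real by simp
      qed (use nm in auto)
    qed
    then show "v \<in> edom (conj f)"
      by (auto simp: edom_def)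
  qed
  then show ?thesis
    using \<delta> mem_interior by blast
qed

lemma Legendre_subdiff_conj_interior:
  assumes L: "Legendre f" and b: "b \<in> subdiff f q"
  shows "b \<in> interior (edom (conj f))"
proof -
  have cvx: "convex_fun f" and nm: "\<And>x. f x \<noteq> -\<infinity>"
    using Legendre_Gamma0[OF L] by (auto simp: Gamma0_def Gamma0_not_MInf)
  have qi: "q \<in> interior (edom f)"
    using Legendre_subdiff_interior[OF L b] .
  obtain a where fq: "f q = ereal a"
    using qi interior_subset edom_finite[of f, OF nm] by blast
  obtain R where R: "R > 0" "ball q R \<subseteq> interior (edom f)"
    using qi open_contains_ball open_interior by blast
  have sphere: "sphere q (R/2) \<subseteq> interior (edom f)"
    using R by auto
  have strict: "\<And>y c. f y = ereal c \<Longrightarrow> y \<noteq> q \<Longrightarrow> a - b \<bullet> q < c - b \<bullet> y"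
    using Legendre_subgradient_strict[OF L b fq] .
  have cont: "continuous_on (sphere q (R/2)) (\<lambda>y. real_of_ereal (f y))"
    using sphere Legendre_continuous_at[OF L] by (blast intro: continuous_at_imp_continuous_on)
  have dom: "sphere q (R/2) \<subseteq> edom f"
    using sphere interior_subset by blast
  have R2: "R/2 > 0"
    using R by simp
  obtain \<delta> where \<delta>: "\<delta> > 0" and growth:
    "\<And>y c. f y = ereal c \<Longrightarrow> R/2 \<le> norm (y - q) \<Longrightarrow> a - b \<bullet> q + \<delta> * norm (y - q) \<le> c - b \<bullet> y"
    using strict_min_linear_growth[OF cvx nm fq R2 dom cont strict] by blast
  have sub: "a - b \<bullet> q \<le> c - b \<bullet> y" if "f y = ereal c" for y c
    using strict[OF that] that fq by (cases "y = q") auto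
  show ?thesis
    using linear_growth_conj_interior[where f = f, OF nm R2 \<delta> sub growth] .
qed

section \<open>Subgradients at interior points\<close>

lemma ball_inner_gt_center:
  fixes d z0 :: "'a::real_inner"
  assumes "\<rho> > 0" "d \<noteq> 0"
  shows "\<exists>z\<in>ball z0 \<rho>. d \<bullet> z0 < d \<bullet> z"
proof -
  define \<delta> where "\<delta> = \<rho> / (2 * norm d)"
  have "\<delta> > 0"
    using assms by (simp add: \<delta>_def)
  moreover have "norm (\<delta> *\<^sub>R d) < \<rho>"
    using assms by (simp add: \<delta>_def)
  moreover have "d \<bullet> d > 0"
    using assms by simp
  ultimately show ?thesis
    by (intro bexI[of _ "z0 + \<delta> *\<^sub>R d"]) (auto simp: inner_add_right dist_norm)
qed

lemma ereal_convex_on_ball_separation: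
  fixes f :: "'a::euclidean_space \<Rightarrow> ereal"
  assumes cvx: "ereal_convex_on (ball z0 \<rho>) f" and \<rho>: "\<rho> > 0"
    and dom: "ball z0 \<rho> \<subseteq> edom f" and nm: "\<And>z. f z \<noteq> -\<infinity>"
    and fz0: "f z0 = ereal a"
  shows "\<exists>d \<gamma> b. \<gamma> > 0 \<and> (\<forall>z r. z \<in> ball z0 \<rho> \<longrightarrow> f z \<le> ereal r \<longrightarrow> d \<bullet> z - \<gamma> * r \<le> b)
    \<and> (\<forall>r<a. b \<le> d \<bullet> z0 - \<gamma> * r)"
proof -
  define B where "B = ball z0 \<rho>"
  have fin: "\<exists>a. f z = ereal a" if "z \<in> B" for z
    using that dom edom_finite[of f, OF nm] by (auto simp: B_def)
  define A where "A = {(z, r). z \<in> B \<and> f z \<le> ereal (0 + r)}"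
  define T where "T = {z0} \<times> {..<a}"
  have "convex A"
    unfolding A_def B_def by (rule convex_shifted_epigraph[OF cvx convex_ball])
  moreover have "convex T"
    by (simp add: T_def convex_Times)
  moreover have "(z0, a) \<in> A" "(z0, a - 1) \<in> T"
    using fz0 \<rho> by (auto simp: A_def B_def T_def)
  moreover have "A \<inter> T = {}"
    using fz0 by (auto simp: A_def T_def)
  ultimately obtain w b where w0: "w \<noteq> 0" and wA: "\<forall>p\<in>A. w \<bullet> p \<le> b" and wT: "\<forall>p\<in>T. b \<le> w \<bullet> p"
    using separating_hyperplane_sets[of A T] by blast
  obtain d \<beta> where w: "w = (d, \<beta>)"
    by (cases w)
  have hA: "d \<bullet> z + \<beta> * r \<le> b" if "z \<in> B" "f z \<le> ereal r" for z r
    using wA that w by (auto simp: A_def inner_Pair inner_real_def)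
  have hT: "b \<le> d \<bullet> z0 + \<beta> * r" if "r < a" for r
    using wT that w by (auto simp: T_def inner_Pair inner_real_def)
  have "\<beta> < 0"
  proof (rule ccontr)
    assume "\<not> \<beta> < 0"
    show False
    proof (cases "\<beta> = 0")
      case True
      then have "d \<noteq> 0"
        using w0 w by (auto simp: zero_prod_def)
      then obtain z where zB: "z \<in> B" and gt: "d \<bullet> z0 < d \<bullet> z"
        using ball_inner_gt_center[OF \<rho>, of d z0] by (auto simp: B_def)
      obtain r where "f z = ereal r"
        using fin[OF zB] by blast
      then have "d \<bullet> z \<le> b"
        using hA[OF zB, of r] True by simp
      moreover have "b \<le> d \<bullet> z0"
        using hT[of "a - 1"] True by simp
      ultimately show False
        using gt by simp
    next
      case False
      with \<open>\<not> \<beta> < 0\<close> have "\<beta> > 0"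
        by simp
      define r where "r = (\<bar>b - d \<bullet> z0\<bar> + 1) / \<beta> + \<bar>a\<bar>"
      have "(\<bar>b - d \<bullet> z0\<bar> + 1) / \<beta> > 0"
        using \<open>\<beta> > 0\<close> by (simp add: add_nonneg_pos)
      then have "a \<le> r"
        unfolding r_def by linarith
      then have "d \<bullet> z0 + \<beta> * r \<le> b"
        using hA[of z0 r] fz0 \<rho> by (simp add: B_def)
      moreover have "\<beta> * r = \<bar>b - d \<bullet> z0\<bar> + 1 + \<beta> * \<bar>a\<bar>"
        using \<open>\<beta> > 0\<close> by (simp add: r_def field_simps)
      moreover have "\<beta> * \<bar>a\<bar> \<ge> 0"
        using \<open>\<beta> > 0\<close> by simp
      ultimately show False
        by linarith
    qed
  qed
  then show ?thesis
    using hA hT by (intro exI[of _ d] exI[of _ "- \<beta>"] exI[of _ b]) (auto simp: B_def)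
qed

lemma ereal_convex_on_ball_subgradient:
  fixes f :: "'a::euclidean_space \<Rightarrow> ereal"
  assumes cvx: "ereal_convex_on (ball z0 \<rho>) f" and \<rho>: "\<rho> > 0"
    and dom: "ball z0 \<rho> \<subseteq> edom f" and nm: "\<And>z. f z \<noteq> -\<infinity>"
  obtains c where "\<And>z. z \<in> ball z0 \<rho> \<Longrightarrow> f z0 + ereal (c \<bullet> (z - z0)) \<le> f z"
proof -
  have fin: "\<exists>a. f z = ereal a" if "z \<in> ball z0 \<rho>" for z
    using that dom edom_finite[of f, OF nm] by auto
  obtain a where fz0: "f z0 = ereal a"
    using fin[of z0] \<rho> by auto
  obtain d \<gamma> b where \<gamma>: "\<gamma> > 0"
    and hA: "\<And>z r. z \<in> ball z0 \<rho> \<Longrightarrow> f z \<le> ereal r \<Longrightarrow> d \<bullet> z - \<gamma> * r \<le> b"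
    and hT: "\<And>r. r < a \<Longrightarrow> b \<le> d \<bullet> z0 - \<gamma> * r"
    using ereal_convex_on_ball_separation[OF cvx \<rho> dom nm fz0] by blast
  have "a \<le> (d \<bullet> z0 - b) / \<gamma>"
  proof (rule dense_le)
    fix r
    assume "r < a"
    then have "\<gamma> * r \<le> d \<bullet> z0 - b"
      using hT[of r] by simp
    then show "r \<le> (d \<bullet> z0 - b) / \<gamma>"
      using \<gamma> by (simp add: pos_le_divide_eq mult.commute)
  qed
  show ?thesis
  proof (rule that)
    fix z
    assume zB: "z \<in> ball z0 \<rho>"
    then obtain r where r: "f z = ereal r"
      using fin by blast
    have "d \<bullet> z - \<gamma> * r \<le> b"
      using hA[of z r] zB r by simp
    then have "(d \<bullet> z - b) / \<gamma> \<le> r"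
      using \<gamma> by (simp add: pos_divide_le_eq mult.commute)
    moreover have "((1 / \<gamma>) *\<^sub>R d) \<bullet> (z - z0) = (d \<bullet> z - b) / \<gamma> - (d \<bullet> z0 - b) / \<gamma>"
      by (simp add: inner_diff_right diff_divide_distrib)
    ultimately show "f z0 + ereal (((1 / \<gamma>) *\<^sub>R d) \<bullet> (z - z0)) \<le> f z"
      using \<open>a \<le> (d \<bullet> z0 - b) / \<gamma>\<close> fz0 r by simp
  qed
qed

lemma ereal_convex_on_local_subgradient:
  fixes f :: "'a::real_inner \<Rightarrow> ereal"
  assumes cvx: "ereal_convex_on U f" and nm: "\<And>z. f z \<noteq> -\<infinity>" and fz0: "f z0 = ereal a"
    and U: "z0 \<in> U" "z \<in> U" and \<rho>: "\<rho> > 0"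
    and near: "\<And>w. w \<in> ball z0 \<rho> \<Longrightarrow> f z0 + ereal (c \<bullet> (w - z0)) \<le> f w"
  shows "f z0 + ereal (c \<bullet> (z - z0)) \<le> f z"
proof (cases "f z")
  case (real b)
  define \<delta> where "\<delta> = min (1/2) (\<rho> / (2 * (norm (z - z0) + 1)))"
  have "\<rho> / (2 * (norm (z - z0) + 1)) > 0"
    using \<rho> by (simp add: add_nonneg_pos)
  then have \<delta>: "\<delta> > 0" "\<delta> \<le> 1"
    by (auto simp: \<delta>_def)
  define w where "w = (1 - \<delta>) *\<^sub>R z0 + \<delta> *\<^sub>R z"
  have w: "w - z0 = \<delta> *\<^sub>R (z - z0)"
    by (simp add: w_def algebra_simps)
  have "norm (w - z0) = \<delta> * norm (z - z0)"
    using \<delta> w by simp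
  also have "\<dots> \<le> (\<rho> / (2 * (norm (z - z0) + 1))) * norm (z - z0)"
    by (intro mult_right_mono) (auto simp: \<delta>_def)
  also have "\<dots> = \<rho> * (norm (z - z0) / (2 * (norm (z - z0) + 1)))"
    by simp
  also have "\<dots> < \<rho>"
    using \<rho> by (simp add: divide_less_eq) (smt (verit) norm_ge_zero)
  finally have "w \<in> ball z0 \<rho>"
    by (simp add: dist_norm norm_minus_commute)
  have "f w \<le> ereal ((1 - \<delta>) * a + \<delta> * b)"
    unfolding w_def by (rule ereal_convex_onD[OF cvx U]) (use fz0 real \<delta> in auto)
  moreover have "f z0 + ereal (c \<bullet> (w - z0)) \<le> f w"
    using near[OF \<open>w \<in> ball z0 \<rho>\<close>] .
  ultimately have "a + \<delta> * (c \<bullet> (z - z0)) \<le> (1 - \<delta>) * a + \<delta> * b"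
    using fz0 w by (metis ereal_less_eq(3) inner_scaleR_right order_trans plus_ereal.simps(1))
  then have "\<delta> * (a + c \<bullet> (z - z0)) \<le> \<delta> * b"
    by (simp add: algebra_simps)
  then show ?thesis
    using \<delta> fz0 real by simp
qed (use nm in auto)

lemma ereal_convex_on_interior_subgradient:
  fixes f :: "'a::euclidean_space \<Rightarrow> ereal"
  assumes cvx: "ereal_convex_on U f" and "open U" and nm: "\<And>z. f z \<noteq> -\<infinity>"
    and z0: "z0 \<in> U" "z0 \<in> interior (edom f)"
  obtains c where "\<And>z. z \<in> U \<Longrightarrow> f z0 + ereal (c \<bullet> (z - z0)) \<le> f z"
proof -
  have "z0 \<in> interior (U \<inter> edom f)"
    using z0 \<open>open U\<close> by (simp add: interior_open)
  then obtain \<rho> where \<rho>: "\<rho> > 0" "ball z0 \<rho> \<subseteq> U \<inter> edom f"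
    using mem_interior interior_subset by (metis open_contains_ball_eq open_interior subset_trans)
  then have "ereal_convex_on (ball z0 \<rho>) f"
    using ereal_convex_on_subset[OF cvx] by blast
  then obtain c where near: "\<And>w. w \<in> ball z0 \<rho> \<Longrightarrow> f z0 + ereal (c \<bullet> (w - z0)) \<le> f w"
    using ereal_convex_on_ball_subgradient \<rho> nm by (metis le_inf_iff)
  obtain a where "f z0 = ereal a"
    using z0(2) interior_subset edom_finite[of f, OF nm] by blast
  then show ?thesis
    using that ereal_convex_on_local_subgradient[OF cvx nm _ z0(1) _ \<rho>(1) near] by blast
qed

section \<open>The function S\<close>

locale hopf_lax =
  fixes J H :: "'a::euclidean_space \<Rightarrow> ereal"
  assumes Gamma0_J: "Gamma0 J" and coercive_J: "one_coercive J" and Legendre_H: "Legendre H"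
begin

abbreviation S :: "'a \<times> real \<Rightarrow> ereal" where
  "S \<equiv> Sfun J H"

lemma Gamma0_H: "Gamma0 H"
  using Legendre_H by (rule Legendre_Gamma0)

lemma J_not_MInf: "J x \<noteq> -\<infinity>"
  using Gamma0_J by (rule Gamma0_not_MInf)

lemma H_not_MInf: "H x \<noteq> -\<infinity>"
  using Gamma0_H by (rule Gamma0_not_MInf)

lemma conj_H_not_MInf: "conj H v \<noteq> -\<infinity>"
  using Gamma0_H by (rule Gamma0_conj_not_MInf)

lemma H_convex: "convex_fun H"
  using Gamma0_H by (simp add: Gamma0_def)

definition Jstar :: "'a \<Rightarrow> real" where
  "Jstar p = real_of_ereal (conj J p)"

lemma conj_J_eq: "conj J p = ereal (Jstar p)"
  using Gamma0_conj_not_MInf[OF Gamma0_J, of p] one_coercive_conj_finite[OF Gamma0_J coercive_J, of p]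
  unfolding Jstar_def by (cases "conj J p") auto

lemma Jstar_convex: "convex_on UNIV Jstar"
proof (rule convex_onI)
  fix p q :: 'a and u :: real
  assume "0 < u" "u < 1"
  then have "conj J ((1 - u) *\<^sub>R p + u *\<^sub>R q) \<le> ereal ((1 - u) * Jstar p + u * Jstar q)"
    by (intro conj_convex_comb) (auto simp: conj_J_eq)
  then show "Jstar ((1 - u) *\<^sub>R p + u *\<^sub>R q) \<le> (1 - u) * Jstar p + u * Jstar q"
    by (simp add: conj_J_eq)
qed simp

lemma S_pos: "s > 0 \<Longrightarrow> S (y, s) = (INF v. J (y - s *\<^sub>R v) + ereal s * conj H v)"
  by (simp add: Sfun_def)

lemma S_zero: "S (y, 0) = conj (\<lambda>p. conj J p + indicator_fun (edom H) p) y"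
  by (simp add: Sfun_def)

lemma S_neg: "s < 0 \<Longrightarrow> S (y, s) = \<infinity>"
  by (simp add: Sfun_def)

lemma S_le: "s > 0 \<Longrightarrow> S (z + s *\<^sub>R v, s) \<le> J z + ereal s * conj H v"
  unfolding S_pos by (rule INF_lower2[of v]) auto

lemma S_pos_lessE:
  assumes s: "s > 0" and "S (y, s) < ereal r"
  obtains v a h where "J (y - s *\<^sub>R v) = ereal a" "conj H v = ereal h" "a + s * h < r"
proof -
  obtain v where v: "J (y - s *\<^sub>R v) + ereal s * conj H v < ereal r"
    using assms(2) unfolding S_pos[OF s] INF_less_iff by blast
  then show ?thesis
    using that J_not_MInf[of "y - s *\<^sub>R v"] conj_H_not_MInf[of v] s
    by (cases "J (y - s *\<^sub>R v)"; cases "conj H v") auto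
qed

definition dual_obj :: "'a \<Rightarrow> real \<Rightarrow> 'a \<Rightarrow> ereal" where
  "dual_obj x t q = ereal (q \<bullet> x) - ereal t * H q - conj J q"

lemma dual_obj_finite: "H q = ereal h \<Longrightarrow> dual_obj x t q = ereal (q \<bullet> x - t * h - Jstar q)"
  by (simp add: dual_obj_def conj_J_eq)

lemma weak_duality:
  assumes hq: "H q = ereal h" and s: "s \<ge> 0"
  shows "ereal (q \<bullet> y - s * h - Jstar q) \<le> S (y, s)"
proof (cases "s = 0")
  case True
  have "ereal (q \<bullet> y) - (conj J q + indicator_fun (edom H) q) \<le> S (y, 0)"
    using fenchel_young[of y q] by (simp add: S_zero inner_commute)
  then show ?thesis
    using True hq by (simp add: conj_J_eq indicator_fun_def edom_def)
next
  case False
  with s have "s > 0"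
    by simp
  show ?thesis
    unfolding S_pos[OF \<open>s > 0\<close>]
  proof (rule INF_greatest)
    fix v
    let ?z = "y - s *\<^sub>R v"
    have "ereal (q \<bullet> ?z - Jstar q) \<le> J ?z"
      using fenchel_young[of q ?z J] by (cases "J ?z") (auto simp: conj_J_eq)
    moreover have "ereal s * ereal (v \<bullet> q - h) \<le> ereal s * conj H v"
      using fenchel_young[of v q H] hq \<open>s > 0\<close> by (intro ereal_mult_left_mono) auto
    ultimately have "ereal (q \<bullet> ?z - Jstar q) + ereal s * ereal (v \<bullet> q - h) \<le> J ?z + ereal s * conj H v"
      by (rule add_mono)
    moreover have "q \<bullet> ?z - Jstar q + s * (v \<bullet> q - h) = q \<bullet> y - s * h - Jstar q"
      by (simp add: inner_diff_right algebra_simps inner_commute)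
    ultimately show "ereal (q \<bullet> y - s * h - Jstar q) \<le> J ?z + ereal s * conj H v"
      by simp
  qed
qed

lemma S_not_MInf: "S z \<noteq> -\<infinity>"
proof (cases z)
  case (Pair y s)
  obtain q h where "H q = ereal h"
    using Gamma0_finite_point[OF Gamma0_H] .
  then show ?thesis
    using weak_duality[of q h s y] S_neg[of s y] Pair by (cases "s < 0") auto
qed

lemma dual_obj_le_S:
  assumes "t > 0"
  shows "dual_obj x t q \<le> S (x, t)"
proof (cases "H q")
  case (real h)
  then show ?thesis
    using weak_duality[OF real, of t x] assms by (simp add: dual_obj_finite inner_commute)
qed (use assms H_not_MInf in \<open>auto simp: dual_obj_def conj_J_eq\<close>)

lemma subdiff_S_halfspace:
  assumes "(q, E) \<in> subdiff S (x, t)"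
  shows "S (x, t) + ereal (q \<bullet> (y - x) + E * (s - t)) \<le> S (y, s)"
  using assms by (auto simp: subdiff_def inner_Pair inner_real_def dest: spec[of _ "(y, s)"])

text \<open>Because \<open>S\<close> dominates the dual bound of every \<open>(q, - H q)\<close>, the subgradient
  inequality at \<open>(x, t)\<close> only has to be checked at the point itself.\<close>

lemma subdiff_S_intro:
  assumes hq: "H q \<le> ereal (- E)" and Sx: "S (x, t) = ereal c" and t: "t \<ge> 0"
    and ineq: "c + Jstar q \<le> q \<bullet> x + E * t"
  shows "(q, E) \<in> subdiff S (x, t)"
  unfolding subdiff_def
proof (intro CollectI conjI allI)
  show "(x, t) \<in> edom S"
    using Sx by (simp add: edom_def)
  obtain h where h: "H q = ereal h"
    using hq H_not_MInf[of q] by (cases "H q") auto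
  fix w :: "'a \<times> real"
  obtain y s where w: "w = (y, s)"
    by (cases w)
  show "S (x, t) + ereal ((q, E) \<bullet> (w - (x, t))) \<le> S w"
  proof (cases "s < 0")
    case True
    then show ?thesis
      using w S_neg by simp
  next
    case False
    have "s * h \<le> s * (- E)"
      using hq h False by (intro mult_left_mono) auto
    then have "c + (q \<bullet> (y - x) + E * (s - t)) \<le> q \<bullet> y - s * h - Jstar q"
      using ineq by (simp add: inner_diff_right algebra_simps)
    then have "ereal (c + (q \<bullet> (y - x) + E * (s - t))) \<le> S (y, s)"
      using weak_duality[OF h, of s y] False by (meson ereal_less_eq(3) not_le order_trans)
    then show ?thesis
      using w Sx by (simp add: inner_Pair inner_real_def)
  qed
qed

text \<open>Testing the subgradient inequality at the points \<open>(z + s v, s)\<close> with \<open>s \<rightarrow> 0\<close> bounds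
  \<open>conj J q\<close>, and with \<open>s \<rightarrow> \<infinity>\<close> bounds \<open>conj (conj H) q \<ge> H q\<close>.\<close>

lemma halfspace_subgradient_test:
  assumes Sx: "S (x, t) = ereal c"
    and sg: "\<And>y s. s > 0 \<Longrightarrow> S (x, t) + ereal (q \<bullet> (y - x) + E * (s - t)) \<le> S (y, s)"
    and "J z = ereal a" "conj H v = ereal h" "s > 0"
  shows "q \<bullet> z - a + s * (q \<bullet> v + E - h) \<le> q \<bullet> x + E * t - c"
proof -
  have "S (x, t) + ereal (q \<bullet> (z + s *\<^sub>R v - x) + E * (s - t)) \<le> S (z + s *\<^sub>R v, s)"
    using sg[OF \<open>s > 0\<close>] .
  also have "\<dots> \<le> J z + ereal s * conj H v"
    using S_le[OF \<open>s > 0\<close>] .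
  finally have "c + (q \<bullet> (z + s *\<^sub>R v - x) + E * (s - t)) \<le> a + s * h"
    using Sx assms(3,4) by simp
  then show ?thesis
    by (simp add: inner_diff_right inner_add_right algebra_simps)
qed

lemma halfspace_subgradient_Jstar_bound:
  assumes Sx: "S (x, t) = ereal c"
    and sg: "\<And>y s. s > 0 \<Longrightarrow> S (x, t) + ereal (q \<bullet> (y - x) + E * (s - t)) \<le> S (y, s)"
  shows "Jstar q \<le> q \<bullet> x + E * t - c"
proof -
  obtain v0 h0 where v0: "conj H v0 = ereal h0"
    using Legendre_conj_finite_point[OF Legendre_H] .
  have "conj J q \<le> ereal (q \<bullet> x + E * t - c)"
    unfolding conj_def
  proof (rule SUP_least)
    fix z
    show "ereal (q \<bullet> z) - J z \<le> ereal (q \<bullet> x + E * t - c)"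
    proof (cases "J z")
      case (real a)
      define \<alpha> where "\<alpha> = q \<bullet> v0 + E - h0"
      have "q \<bullet> z - a \<le> q \<bullet> x + E * t - c + e" if "e > 0" for e
      proof -
        define s where "s = e / (\<bar>\<alpha>\<bar> + 1)"
        have "s > 0" "s * \<bar>\<alpha>\<bar> \<le> e"
          using \<open>e > 0\<close> by (simp_all add: s_def field_simps)
        moreover have "q \<bullet> z - a + s * \<alpha> \<le> q \<bullet> x + E * t - c"
          using halfspace_subgradient_test[OF Sx sg real v0 \<open>s > 0\<close>] by (simp add: \<alpha>_def)
        moreover have "- (s * \<alpha>) \<le> s * \<bar>\<alpha>\<bar>"
          using \<open>s > 0\<close> by (metis abs_ge_minus_self abs_mult abs_of_pos)
        ultimately show ?thesis
          by linarith
      qed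
      then have "q \<bullet> z - a \<le> q \<bullet> x + E * t - c"
        by (rule field_le_epsilon)
      then show ?thesis
        using real by simp
    qed (use J_not_MInf in auto)
  qed
  then show ?thesis
    by (simp add: conj_J_eq)
qed

lemma halfspace_subgradient_H_bound:
  assumes Sx: "S (x, t) = ereal c"
    and sg: "\<And>y s. s > 0 \<Longrightarrow> S (x, t) + ereal (q \<bullet> (y - x) + E * (s - t)) \<le> S (y, s)"
  shows "H q \<le> ereal (- E)"
proof -
  obtain z0 a0 where z0: "J z0 = ereal a0"
    using Gamma0_finite_point[OF Gamma0_J] .
  have "conj (conj H) q \<le> ereal (- E)"
    unfolding conj_def[of "conj H" q]
  proof (rule SUP_least)
    fix v
    show "ereal (q \<bullet> v) - conj H v \<le> ereal (- E)"
    proof (cases "conj H v")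
      case (real h)
      have "q \<bullet> v + E - h \<le> 0"
      proof (rule ccontr)
        assume "\<not> ?thesis"
        then have pos: "q \<bullet> v + E - h > 0"
          by simp
        define C where "C = q \<bullet> x + E * t - c"
        define s where "s = (\<bar>C - (q \<bullet> z0 - a0)\<bar> + 1) / (q \<bullet> v + E - h)"
        have "s > 0" "s * (q \<bullet> v + E - h) = \<bar>C - (q \<bullet> z0 - a0)\<bar> + 1"
          using pos by (simp_all add: s_def)
        then show False
          using halfspace_subgradient_test[OF Sx sg z0 real] by (fastforce simp: C_def)
      qed
      then show ?thesis
        using real by simp
    qed (use conj_H_not_MInf in auto)
  qed
  then show ?thesis
    using Gamma0_le_biconj[OF Gamma0_H, of q] by simp
qed


text \<open>The perspective-type formula for \<open>t > 0\<close> mixes the minimizing directions \<open>v1, v2\<close>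
  with the weights \<open>(1 - u) s1 / s\<close> and \<open>u s2 / s\<close>.\<close>

lemma S_convex_comb:
  assumes s1: "s1 > 0" and s2: "s2 > 0" and r1: "S (y1, s1) \<le> ereal r1" and r2: "S (y2, s2) \<le> ereal r2"
    and u: "0 \<le> u" "u \<le> 1"
  shows "S ((1 - u) *\<^sub>R (y1, s1) + u *\<^sub>R (y2, s2)) \<le> ereal ((1 - u) * r1 + u * r2)"
proof -
  define y where "y = (1 - u) *\<^sub>R y1 + u *\<^sub>R y2"
  define s where "s = (1 - u) * s1 + u * s2"
  have "s > 0"
    using u s1 s2 by (cases "u = 1") (auto simp: s_def add_pos_nonneg)
  have "S (y, s) \<le> ereal ((1 - u) * r1 + u * r2) + ereal e" if "e > 0" for e
  proof -
    have "S (y1, s1) < ereal (r1 + e)"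
      using order_le_less_trans[OF r1, of "ereal (r1 + e)"] \<open>e > 0\<close> by simp
    then obtain v1 a1 h1
      where A1: "J (y1 - s1 *\<^sub>R v1) = ereal a1" "conj H v1 = ereal h1" "a1 + s1 * h1 < r1 + e"
      by (rule S_pos_lessE[OF s1])
    have "S (y2, s2) < ereal (r2 + e)"
      using order_le_less_trans[OF r2, of "ereal (r2 + e)"] \<open>e > 0\<close> by simp
    then obtain v2 a2 h2
      where A2: "J (y2 - s2 *\<^sub>R v2) = ereal a2" "conj H v2 = ereal h2" "a2 + s2 * h2 < r2 + e"
      by (rule S_pos_lessE[OF s2])
    define \<mu> where "\<mu> = u * s2 / s"
    have \<mu>: "0 \<le> \<mu>" "\<mu> \<le> 1"
      using u s1 s2 \<open>s > 0\<close> by (auto simp: \<mu>_def s_def)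
    have sm: "s * (1 - \<mu>) = (1 - u) * s1" "s * \<mu> = u * s2"
      using \<open>s > 0\<close> by (simp_all add: \<mu>_def s_def field_simps)
    define v where "v = (1 - \<mu>) *\<^sub>R v1 + \<mu> *\<^sub>R v2"
    have "s *\<^sub>R v = ((1 - u) * s1) *\<^sub>R v1 + (u * s2) *\<^sub>R v2"
      by (simp add: v_def scaleR_add_right flip: sm)
    then have yv: "y - s *\<^sub>R v = (1 - u) *\<^sub>R (y1 - s1 *\<^sub>R v1) + u *\<^sub>R (y2 - s2 *\<^sub>R v2)"
      by (simp add: y_def scaleR_diff_right algebra_simps)
    have "S (y, s) \<le> J (y - s *\<^sub>R v) + ereal s * conj H v"
      using S_le[OF \<open>s > 0\<close>, of "y - s *\<^sub>R v" v] by simp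
    also have "\<dots> \<le> ereal ((1 - u) * a1 + u * a2) + ereal s * ereal ((1 - \<mu>) * h1 + \<mu> * h2)"
    proof (intro add_mono ereal_mult_left_mono)
      show "J (y - s *\<^sub>R v) \<le> ereal ((1 - u) * a1 + u * a2)"
        unfolding yv by (rule convex_funD) (use Gamma0_J A1 A2 u in \<open>auto simp: Gamma0_def\<close>)
      show "conj H v \<le> ereal ((1 - \<mu>) * h1 + \<mu> * h2)"
        unfolding v_def by (rule conj_convex_comb) (use A1 A2 \<mu> in auto)
    qed (use \<open>s > 0\<close> in simp)
    finally have S_le_comb: "S (y, s) \<le> ereal ((1 - u) * a1 + u * a2 + s * ((1 - \<mu>) * h1 + \<mu> * h2))"
      by simp
    have "s * ((1 - \<mu>) * h1 + \<mu> * h2) = (s * (1 - \<mu>)) * h1 + (s * \<mu>) * h2"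
      by (simp add: algebra_simps)
    also have "\<dots> = (1 - u) * (s1 * h1) + u * (s2 * h2)"
      by (simp add: sm)
    finally have "(1 - u) * a1 + u * a2 + s * ((1 - \<mu>) * h1 + \<mu> * h2)
        = (1 - u) * (a1 + s1 * h1) + u * (a2 + s2 * h2)"
      by (simp add: algebra_simps)
    also have "\<dots> \<le> (1 - u) * (r1 + e) + u * (r2 + e)"
      using A1(3) A2(3) u by (auto intro!: add_mono[OF mult_left_mono mult_left_mono])
    also have "\<dots> = (1 - u) * r1 + u * r2 + e"
      by (simp add: algebra_simps)
    finally show ?thesis
      using S_le_comb by (metis ereal_less_eq(3) order_trans plus_ereal.simps(1))
  qed
  then have "S (y, s) \<le> ereal ((1 - u) * r1 + u * r2)"
    by (rule ereal_le_epsilon2)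
  then show ?thesis
    by (simp add: y_def s_def)
qed

lemma S_convex_pos: "ereal_convex_on {z. 0 < snd z} S"
  unfolding ereal_convex_on_def
proof (intro ballI allI impI)
  fix z1 z2 :: "'a \<times> real" and a b u :: real
  assume "z1 \<in> {z. 0 < snd z}" "z2 \<in> {z. 0 < snd z}" "S z1 \<le> ereal a" "S z2 \<le> ereal b" "0 \<le> u" "u \<le> 1"
  then show "S ((1 - u) *\<^sub>R z1 + u *\<^sub>R z2) \<le> ereal ((1 - u) * a + u * b)"
    using S_convex_comb[of "snd z1" "snd z2" "fst z1" a "fst z2" b u] by simp
qed

lemma interior_edom_S_pos:
  assumes "(x, t) \<in> interior (edom S)"
  shows "t > 0"
proof -
  obtain e where e: "e > 0" "ball (x, t) e \<subseteq> edom S"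
    using assms mem_interior by blast
  have "(x, t - e/2) \<in> ball (x, t) e"
    using e by (simp add: dist_Pair_Pair dist_real_def)
  then have "S (x, t - e/2) < \<infinity>"
    using e by (auto simp: edom_def)
  then have "\<not> t - e/2 < 0"
    using S_neg[of "t - e/2" x] by auto
  then show ?thesis
    using e by simp
qed

lemma interior_S_subgradient:
  assumes int: "(x, t) \<in> interior (edom S)"
  obtains c E where "\<And>y s. s > 0 \<Longrightarrow> S (x, t) + ereal (c \<bullet> (y - x) + E * (s - t)) \<le> S (y, s)"
proof -
  have "open {z :: 'a \<times> real. 0 < snd z}"
    by (intro open_Collect_less continuous_intros)
  moreover have "(x, t) \<in> {z. 0 < snd z}"
    using interior_edom_S_pos[OF int] by simp
  ultimately obtain w where w: "\<And>z. z \<in> {z. 0 < snd z} \<Longrightarrow> S (x, t) + ereal (w \<bullet> (z - (x, t))) \<le> S z"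
    by (rule ereal_convex_on_interior_subgradient[OF S_convex_pos _ S_not_MInf _ int]) blast
  show ?thesis
  proof (rule that[of "fst w" "snd w"])
    fix y :: 'a and s :: real
    assume "s > 0"
    then show "S (x, t) + ereal (fst w \<bullet> (y - x) + snd w * (s - t)) \<le> S (y, s)"
      using w[of "(y, s)"] by (cases w) (simp add: inner_Pair inner_real_def)
  qed
qed

lemma interior_edom_S_intro:
  assumes t: "t > 0" and a: "J a < \<infinity>" and b: "b \<in> interior (edom (conj H))"
  shows "(a + t *\<^sub>R b, t) \<in> interior (edom S)"
proof -
  obtain d where d: "d > 0" "ball b d \<subseteq> edom (conj H)"
    using b mem_interior by blast
  define P where "P = {z :: 'a \<times> real. 0 < snd z}"
  define f where "f z = (1 / snd z) *\<^sub>R (fst z - a)" for z :: "'a \<times> real"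
  have "open P"
    unfolding P_def by (intro open_Collect_less continuous_intros)
  moreover have "continuous_on P f"
    unfolding f_def P_def by (intro continuous_intros) auto
  ultimately have "open (P \<inter> f -` ball b d)"
    by (intro continuous_open_preimage) auto
  moreover have "(a + t *\<^sub>R b, t) \<in> P \<inter> f -` ball b d"
    using t d by (simp add: P_def f_def)
  moreover have "P \<inter> f -` ball b d \<subseteq> edom S"
  proof
    fix z
    assume z: "z \<in> P \<inter> f -` ball b d"
    obtain y s where zz: "z = (y, s)"
      by (cases z)
    have s: "s > 0" and v: "conj H (f z) < \<infinity>"
      using z zz d by (auto simp: P_def edom_def)
    have "S (a + s *\<^sub>R f z, s) \<le> J a + ereal s * conj H (f z)"
      by (rule S_le[OF s])
    also have "\<dots> < \<infinity>"
      using a v s by (cases "J a"; cases "conj H (f z)") auto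
    finally show "z \<in> edom S"
      using s zz by (simp add: edom_def f_def)
  qed
  ultimately show ?thesis
    using interior_maximal by blast
qed


text \<open>Optimality of \<open>q\<close> is a sum rule for \<open>H + (Jstar - \<langle>_, x\<rangle>) / t\<close>: it splits into
  \<open>b \<in> \<partial>H(q)\<close> and \<open>x - t b \<in> \<partial>Jstar(q)\<close>, and the latter puts \<open>x - t b\<close> into the domain of \<open>J\<close>.\<close>

lemma maximizer_subgradient:
  assumes t: "t > 0" and hq: "H q = ereal h" and max: "\<And>p. dual_obj x t p \<le> dual_obj x t q"
  obtains b where "b \<in> subdiff H q" "J (x - t *\<^sub>R b) < \<infinity>"
proof -
  define g where "g y = (Jstar y - y \<bullet> x) / t" for y
  have g: "convex_on UNIV g"
  proof (rule convex_onI)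
    fix p r :: 'a and u :: real
    assume "0 < u" "u < 1"
    then have "Jstar ((1 - u) *\<^sub>R p + u *\<^sub>R r) \<le> (1 - u) * Jstar p + u * Jstar r"
      by (intro convex_onD[OF Jstar_convex]) auto
    then have "Jstar ((1 - u) *\<^sub>R p + u *\<^sub>R r) - ((1 - u) *\<^sub>R p + u *\<^sub>R r) \<bullet> x
        \<le> (1 - u) * (Jstar p - p \<bullet> x) + u * (Jstar r - r \<bullet> x)"
      by (simp add: inner_add_left algebra_simps)
    then show "g ((1 - u) *\<^sub>R p + u *\<^sub>R r) \<le> (1 - u) * g p + u * g r"
      using t by (simp add: g_def divide_right_mono add_divide_distrib[symmetric])
  qed simp
  have min: "h + g q \<le> b + g y" if "H y = ereal b" for y b
  proof -
    have "t * h + (Jstar q - q \<bullet> x) \<le> t * b + (Jstar y - y \<bullet> x)"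
      using max[of y] that hq by (simp add: dual_obj_finite inner_commute)
    then have "(t * h + (Jstar q - q \<bullet> x)) / t \<le> (t * b + (Jstar y - y \<bullet> x)) / t"
      using t by (simp add: divide_right_mono)
    then show ?thesis
      using t by (simp add: g_def add_divide_distrib)
  qed
  obtain b where b: "b \<in> subdiff H q" and gb: "\<And>y. g q - b \<bullet> (y - q) \<le> g y"
    using convex_sum_min_subgradient[OF H_convex H_not_MInf g hq min] by blast
  define a where "a = x - t *\<^sub>R b"
  have "a \<in> subdiff (conj J) q"
    unfolding subdiff_def
  proof (intro CollectI conjI allI)
    show "q \<in> edom (conj J)"
      by (simp add: conj_J_eq edom_def)
    fix y
    have tg: "t * g z = Jstar z - z \<bullet> x" for z
      using t by (simp add: g_def)
    have "t * (g q - b \<bullet> (y - q)) \<le> t * g y"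
      using gb[of y] t by (simp add: mult_left_mono)
    then have "Jstar q - q \<bullet> x - t * (b \<bullet> y) + t * (b \<bullet> q) \<le> Jstar y - y \<bullet> x"
      by (simp add: right_diff_distrib tg inner_diff_right)
    moreover have "a \<bullet> (y - q) = x \<bullet> y - x \<bullet> q - t * (b \<bullet> y) + t * (b \<bullet> q)"
      by (simp add: a_def inner_diff_left inner_diff_right)
    ultimately have "Jstar q + a \<bullet> (y - q) \<le> Jstar y"
      using inner_commute[of x y] inner_commute[of x q] by linarith
    then show "conj J q + ereal (a \<bullet> (y - q)) \<le> conj J y"
      by (simp add: conj_J_eq)
  qed
  then have "conj (conj J) a \<le> ereal (a \<bullet> q - Jstar q)"
    by (rule conj_le_of_subdiff) (simp add: conj_J_eq)
  then have "J a \<le> ereal (a \<bullet> q - Jstar q)"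
    using Gamma0_le_biconj[OF Gamma0_J, of a] by (rule order_trans[rotated])
  then have "J a < \<infinity>"
    by (rule order_le_less_trans) simp
  then show ?thesis
    using that b by (simp add: a_def)
qed

lemma maximizer_interior:
  assumes t: "t > 0" and hq: "H q = ereal h" and max: "\<And>p. dual_obj x t p \<le> dual_obj x t q"
  shows "(x, t) \<in> interior (edom S)" "q \<in> interior (edom H)"
proof -
  obtain b where b: "b \<in> subdiff H q" and Jb: "J (x - t *\<^sub>R b) < \<infinity>"
    using maximizer_subgradient[OF t hq max] .
  show "q \<in> interior (edom H)"
    using Legendre_subdiff_interior[OF Legendre_H b] .
  have "(x - t *\<^sub>R b + t *\<^sub>R b, t) \<in> interior (edom S)"
    using interior_edom_S_intro[OF t Jb Legendre_subdiff_conj_interior[OF Legendre_H b]] .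
  then show "(x, t) \<in> interior (edom S)"
    by simp
qed

lemma maximizer_unique:
  assumes t: "t > 0" and h1: "H p1 = ereal h1"
    and max1: "\<And>p. dual_obj x t p \<le> dual_obj x t p1" and max2: "\<And>p. dual_obj x t p \<le> dual_obj x t p2"
  shows "p1 = p2"
proof (rule ccontr)
  assume "p1 \<noteq> p2"
  obtain h2 where h2: "H p2 = ereal h2"
  proof (cases "H p2")
    case PInf
    then have "dual_obj x t p2 = -\<infinity>"
      using t by (simp add: dual_obj_def conj_J_eq)
    then show ?thesis
      using max2[of p1] h1 by (simp add: dual_obj_finite)
  qed (use H_not_MInf in auto)
  have i1: "p1 \<in> interior (edom H)" and i2: "p2 \<in> interior (edom H)"
    using maximizer_interior(2)[OF t h1 max1] maximizer_interior(2)[OF t h2 max2] .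
  define m where "m = (1/2) *\<^sub>R p1 + (1/2) *\<^sub>R p2"
  have "H m < ereal ((h1 + h2) / 2)"
    unfolding m_def by (rule Legendre_midpoint_less[OF Legendre_H i1 i2 \<open>p1 \<noteq> p2\<close> h1 h2])
  then obtain hm where hm: "H m = ereal hm" "2 * hm < h1 + h2"
    using H_not_MInf[of m] by (cases "H m") auto
  have "Jstar ((1 - 1/2) *\<^sub>R p1 + (1/2) *\<^sub>R p2) \<le> (1 - 1/2) * Jstar p1 + (1/2) * Jstar p2"
    by (rule convex_onD[OF Jstar_convex]) auto
  then have "2 * Jstar m \<le> Jstar p1 + Jstar p2"
    by (simp add: m_def)
  moreover have "2 * (m \<bullet> x) = p1 \<bullet> x + p2 \<bullet> x"
    by (simp add: m_def inner_add_left)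
  moreover have "2 * (t * hm) < t * h1 + t * h2"
    using mult_strict_left_mono[OF hm(2) t] by (simp add: algebra_simps)
  moreover have "p2 \<bullet> x - t * h2 - Jstar p2 \<le> p1 \<bullet> x - t * h1 - Jstar p1"
    and "p1 \<bullet> x - t * h1 - Jstar p1 \<le> p2 \<bullet> x - t * h2 - Jstar p2"
    and "m \<bullet> x - t * hm - Jstar m \<le> p1 \<bullet> x - t * h1 - Jstar p1"
    using max1[of p2] max2[of p1] max1[of m] h1 h2 hm by (simp_all add: dual_obj_finite)
  ultimately show False
    by linarith
qed

lemma maximizer_in_subdiff_S:
  assumes t: "t \<ge> 0" and hq: "H q = ereal h" and eq: "S (x, t) = dual_obj x t q"
  shows "(q, - h) \<in> subdiff S (x, t)"
proof (rule subdiff_S_intro)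
  show "S (x, t) = ereal (q \<bullet> x - t * h - Jstar q)"
    using eq hq by (simp add: dual_obj_finite)
qed (use t hq in auto)

lemma subdiff_S_pos:
  assumes t: "t > 0" and sd: "(q, E) \<in> subdiff S (x, t)"
  shows "H q = ereal (- E)" "\<And>p. dual_obj x t p \<le> dual_obj x t q"
proof -
  obtain c where Sx: "S (x, t) = ereal c"
    using sd S_not_MInf[of "(x, t)"] by (cases "S (x, t)") (auto simp: subdiff_def edom_def)
  have hq: "H q \<le> ereal (- E)" and jq: "Jstar q \<le> q \<bullet> x + E * t - c"
    using halfspace_subgradient_H_bound[OF Sx subdiff_S_halfspace[OF sd]]
      halfspace_subgradient_Jstar_bound[OF Sx subdiff_S_halfspace[OF sd]] by simp_all
  obtain h where h: "H q = ereal h"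
    using hq H_not_MInf[of q] by (cases "H q") auto
  have "q \<bullet> x - t * h - Jstar q \<le> c"
    using dual_obj_le_S[OF t, of x q] h Sx by (simp add: dual_obj_finite)
  then have "t * (- h) \<le> t * E"
    using jq by (simp add: algebra_simps)
  then have "- h \<le> E"
    using mult_le_cancel_left_pos[OF t, of "- h" E] by simp
  then have "h = - E"
    using hq h by simp
  then show "H q = ereal (- E)"
    using h by simp
  fix p
  have "dual_obj x t p \<le> S (x, t)"
    using dual_obj_le_S[OF t] .
  also have "\<dots> \<le> dual_obj x t q"
    using Sx h \<open>h = - E\<close> jq by (simp add: dual_obj_finite algebra_simps)
  finally show "dual_obj x t p \<le> dual_obj x t q" .
qed

lemma interior_dual_maximizer:
  assumes int: "(x, t) \<in> interior (edom S)"
  obtains c h where "H c = ereal h" "\<And>q. dual_obj x t q \<le> dual_obj x t c" "S (x, t) = dual_obj x t c"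
proof -
  have t: "t > 0"
    using interior_edom_S_pos[OF int] .
  obtain Sx where Sx: "S (x, t) = ereal Sx"
    using int interior_subset S_not_MInf[of "(x, t)"] by (cases "S (x, t)") (auto simp: edom_def)
  obtain c E where sg: "\<And>y s. s > 0 \<Longrightarrow> S (x, t) + ereal (c \<bullet> (y - x) + E * (s - t)) \<le> S (y, s)"
    by (rule interior_S_subgradient[OF int]) blast
  have hc: "H c \<le> ereal (- E)" and jc: "Jstar c \<le> c \<bullet> x + E * t - Sx"
    using halfspace_subgradient_H_bound[OF Sx sg] halfspace_subgradient_Jstar_bound[OF Sx sg] by auto
  obtain h where h: "H c = ereal h"
    using hc H_not_MInf[of c] by (cases "H c") auto
  have "t * h \<le> t * (- E)"
    using hc h t by (intro mult_left_mono) auto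
  then have "S (x, t) \<le> dual_obj x t c"
    using jc Sx h by (simp add: dual_obj_finite algebra_simps)
  moreover have "dual_obj x t q \<le> S (x, t)" for q
    using dual_obj_le_S[OF t] .
  ultimately show ?thesis
    using that[OF h] order_trans antisym by blast
qed


definition restricted_conj_J :: "'a \<Rightarrow> ereal" where
  "restricted_conj_J p = conj J p + indicator_fun (edom H) p"

lemma S_zero_eq_conj: "S (y, 0) = conj restricted_conj_J y"
  by (simp add: S_zero restricted_conj_J_def[abs_def])

lemma restricted_conj_J_le_iff: "restricted_conj_J p \<le> ereal r \<longleftrightarrow> H p < \<infinity> \<and> Jstar p \<le> r"
  by (simp add: restricted_conj_J_def conj_J_eq indicator_fun_def edom_def)

lemma restricted_conj_J_convex: "convex_fun restricted_conj_J"
  unfolding convex_fun_iff_ereal_convex_on_UNIV ereal_convex_on_def restricted_conj_J_le_iff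
proof (intro ballI allI impI conjI)
  fix p1 p2 :: 'a and r1 r2 u :: real
  assume p: "H p1 < \<infinity> \<and> Jstar p1 \<le> r1" "H p2 < \<infinity> \<and> Jstar p2 \<le> r2" and u: "0 \<le> u" "u \<le> 1"
  obtain h1 h2 where "H p1 = ereal h1" "H p2 = ereal h2"
    using p H_not_MInf[of p1] H_not_MInf[of p2] by (cases "H p1"; cases "H p2") auto
  then have "H ((1 - u) *\<^sub>R p1 + u *\<^sub>R p2) \<le> ereal ((1 - u) * h1 + u * h2)"
    using u by (intro convex_funD[OF H_convex]) auto
  then show "H ((1 - u) *\<^sub>R p1 + u *\<^sub>R p2) < \<infinity>"
    by (rule order_le_less_trans) simp
  have "Jstar ((1 - u) *\<^sub>R p1 + u *\<^sub>R p2) \<le> (1 - u) * Jstar p1 + u * Jstar p2"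
    using u by (intro convex_onD[OF Jstar_convex]) auto
  also have "\<dots> \<le> (1 - u) * r1 + u * r2"
    using p u by (intro add_mono mult_left_mono) auto
  finally show "Jstar ((1 - u) *\<^sub>R p1 + u *\<^sub>R p2) \<le> (1 - u) * r1 + u * r2" .
qed

lemma restricted_conj_J_lsc:
  assumes "H p < \<infinity>"
  shows "restricted_conj_J p \<le> Liminf (at p) restricted_conj_J"
proof -
  have "isCont Jstar p"
    using convex_on_continuous[OF open_UNIV Jstar_convex] by (simp add: continuous_on_eq_continuous_at)
  then have lim: "((\<lambda>z. ereal (Jstar z)) \<longlongrightarrow> ereal (Jstar p)) (at p)"
    by (simp add: isCont_def)
  have below: "ereal (Jstar z) \<le> restricted_conj_J z" for z
    by (simp add: restricted_conj_J_def conj_J_eq indicator_fun_def)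
  show ?thesis
    unfolding le_Liminf_iff
  proof (intro allI impI)
    fix c
    assume "c < restricted_conj_J p"
    then have "eventually (\<lambda>z. c < ereal (Jstar z)) (at p)"
      using order_tendstoD(1)[OF lim] assms by (simp add: restricted_conj_J_def conj_J_eq indicator_fun_def edom_def)
    then show "eventually (\<lambda>z. c < restricted_conj_J z) (at p)"
      by (rule eventually_mono) (meson below less_le_trans)
  qed
qed

text \<open>On \<open>dom H\<close> the restricted conjugate is lower semicontinuous, so there it is recovered as its
  biconjugate \<open>conj (S (_, 0))\<close>; this turns a subgradient of \<open>S (_, 0)\<close> into the bound on \<open>Jstar\<close>.\<close>

lemma subdiff_S_zero_bound:
  assumes Sx: "S (x, 0) = ereal c" and hp: "H p < \<infinity>" and sd: "p \<in> subdiff (\<lambda>y. S (y, 0)) x"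
  shows "Jstar p \<le> p \<bullet> x - c"
proof (rule dense_le)
  fix r
  assume "r < Jstar p"
  moreover have "restricted_conj_J p = ereal (Jstar p)"
    using hp by (simp add: restricted_conj_J_def conj_J_eq indicator_fun_def edom_def)
  ultimately obtain a b where "\<forall>y. ereal (a \<bullet> y + b) \<le> restricted_conj_J y" "r < a \<bullet> p + b"
    using lsc_convex_affine_minorant[OF restricted_conj_J_convex restricted_conj_J_lsc[OF hp]] by blast
  then have "ereal r < conj (conj restricted_conj_J) p"
    by (rule affine_minorant_less_biconj)
  also have "conj (conj restricted_conj_J) p \<le> ereal (p \<bullet> x - c)"
    unfolding conj_def[of "conj restricted_conj_J" p]
  proof (rule SUP_least)
    fix y
    have "S (x, 0) + ereal (p \<bullet> (y - x)) \<le> S (y, 0)"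
      using sd by (simp add: subdiff_def)
    then show "ereal (p \<bullet> y) - conj restricted_conj_J y \<le> ereal (p \<bullet> x - c)"
      unfolding S_zero_eq_conj[symmetric] using Sx S_not_MInf[of "(y, 0)"]
      by (cases "S (y, 0)") (auto simp: inner_diff_right)
  qed
  finally show "r \<le> p \<bullet> x - c"
    by simp
qed

lemma subdiff_S_interior:
  assumes int: "(x, t) \<in> interior (edom S)"
  shows "\<exists>pbar. (\<forall>q. dual_obj x t q \<le> dual_obj x t pbar)
    \<and> (\<forall>p. (\<forall>q. dual_obj x t q \<le> dual_obj x t p) \<longrightarrow> p = pbar)
    \<and> H pbar < \<infinity> \<and> subdiff S (x, t) = {(pbar, - real_of_ereal (H pbar))}"
proof -
  have t: "t > 0"
    using interior_edom_S_pos[OF int] .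
  obtain c h where h: "H c = ereal h" and max: "\<And>q. dual_obj x t q \<le> dual_obj x t c"
    and eq: "S (x, t) = dual_obj x t c"
    using interior_dual_maximizer[OF int] by blast
  have unique: "p = c" if "\<forall>q. dual_obj x t q \<le> dual_obj x t p" for p
    using maximizer_unique[OF t h max, of p] that by simp
  have "subdiff S (x, t) = {(c, - h)}"
  proof safe
    fix q E
    assume "(q, E) \<in> subdiff S (x, t)"
    then have "H q = ereal (- E)" "\<forall>p. dual_obj x t p \<le> dual_obj x t q"
      using subdiff_S_pos[OF t] by blast+
    then show "q = c" "E = - h"
      using unique[of q] h by auto
  next
    show "(c, - h) \<in> subdiff S (x, t)"
      using maximizer_in_subdiff_S[OF _ h eq] t by simp
  qed
  then show ?thesis
    using max unique h by auto
qed

lemma subdiff_S_zero: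
  assumes dom: "(x, 0) \<in> edom S"
  shows "subdiff S (x, 0) = {(p, E). p \<in> subdiff (\<lambda>y. S (y, 0)) x \<and> p \<in> edom H \<and> ereal E \<le> - H p}"
proof -
  obtain c where Sx: "S (x, 0) = ereal c"
    using dom S_not_MInf[of "(x, 0)"] by (cases "S (x, 0)") (auto simp: edom_def)
  show ?thesis
  proof safe
    fix p E
    assume sd: "(p, E) \<in> subdiff S (x, 0)"
    have hp: "H p \<le> ereal (- E)" and jp: "Jstar p \<le> p \<bullet> x - c"
      using halfspace_subgradient_H_bound[OF Sx subdiff_S_halfspace[OF sd]]
        halfspace_subgradient_Jstar_bound[OF Sx subdiff_S_halfspace[OF sd]] by simp_all
    obtain h where h: "H p = ereal h"
      using hp H_not_MInf[of p] by (cases "H p") auto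
    show "p \<in> edom H" "ereal E \<le> - H p"
      using hp h by (auto simp: edom_def)
    show "p \<in> subdiff (\<lambda>y. S (y, 0)) x"
      unfolding subdiff_def
    proof (intro CollectI conjI allI)
      show "x \<in> edom (\<lambda>y. S (y, 0))"
        using Sx by (simp add: edom_def)
      fix y
      have "ereal (c + p \<bullet> (y - x)) \<le> ereal (p \<bullet> y - 0 * h - Jstar p)"
        using jp by (simp add: inner_diff_right)
      also have "\<dots> \<le> S (y, 0)"
        using weak_duality[OF h, of 0 y] by simp
      finally show "S (x, 0) + ereal (p \<bullet> (y - x)) \<le> S (y, 0)"
        using Sx by simp
    qed
  next
    fix p E
    assume sd: "p \<in> subdiff (\<lambda>y. S (y, 0)) x" and "p \<in> edom H" and E: "ereal E \<le> - H p"
    then have hp: "H p < \<infinity>"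
      by (simp add: edom_def)
    show "(p, E) \<in> subdiff S (x, 0)"
    proof (rule subdiff_S_intro[OF _ Sx])
      show "H p \<le> ereal (- E)"
        using E hp H_not_MInf[of p] by (cases "H p") auto
      show "c + Jstar p \<le> p \<bullet> x + E * 0"
        using subdiff_S_zero_bound[OF Sx hp sd] by simp
    qed simp
  qed
qed

lemma subdiff_S_boundary:
  assumes "t > 0" and "(x, t) \<notin> interior (edom S)"
  shows "subdiff S (x, t) = {}"
proof (rule ccontr)
  assume "subdiff S (x, t) \<noteq> {}"
  then obtain q E where "(q, E) \<in> subdiff S (x, t)"
    by auto
  then have "H q = ereal (- E)" and "\<And>p. dual_obj x t p \<le> dual_obj x t q"
    using subdiff_S_pos[OF \<open>t > 0\<close>] by blast+
  then show False
    using maximizer_interior(1)[OF \<open>t > 0\<close>] assms(2) by blast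
qed

end

theorem mainTheorem6:
  fixes J H :: "real ^ 'n \<Rightarrow> ereal" and x :: "real ^ 'n" and t :: real
  assumes A1: "Gamma0 J" "Gamma0 H" "one_coercive J" "Legendre H"
    and dom: "(x, t) \<in> edom (Sfun J H)"
  shows "((x, t) \<in> interior (edom (Sfun J H)) \<longrightarrow>
            (\<exists>pbar.
               (\<forall>q. ereal (inner q x) - ereal t * H q - conj J q
                      \<le> ereal (inner pbar x) - ereal t * H pbar - conj J pbar)
             \<and> (\<forall>p. (\<forall>q. ereal (inner q x) - ereal t * H q - conj J q
                          \<le> ereal (inner p x) - ereal t * H p - conj J p) \<longrightarrow> p = pbar)
             \<and> H pbar < \<infinity>
             \<and> subdiff (Sfun J H) (x, t) = {(pbar, - real_of_ereal (H pbar))}))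
       \<and> (t = 0 \<longrightarrow>
            subdiff (Sfun J H) (x, t) =
              {(p, E). p \<in> subdiff (\<lambda>y. Sfun J H (y, 0)) x \<and> p \<in> edom H \<and> ereal E \<le> - H p})
       \<and> (t > 0 \<and> (x, t) \<notin> interior (edom (Sfun J H)) \<longrightarrow>
            subdiff (Sfun J H) (x, t) = {})"
proof -
  interpret hopf_lax J H
    using A1 by unfold_locales
  show ?thesis
    using subdiff_S_interior[of x t] subdiff_S_zero[of x] subdiff_S_boundary[of t x] dom
    unfolding dual_obj_def by blast
qed

end
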